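(* Let $a\in\mathbb{Q}\setminus\{-1,0,1\}$. For all $B\ge0$ and all sufficiently large $x$, \[ \sum_{\frac{\sqrt{x}}{(\log x)^B}<q^k\le x} \#\{ p\le x : \nu_p(a)=0,\ q^k \mid (p-1)/\mathrm{ord}_p(a) \}\ll_{a,B} \frac{x\log\log x}{(\log x)^2}, \] where the sum is over prime powers $q^k$ ($k\ge1$) in the stated range.
   Context: $p,q$ denote primes; $\nu_p(a)$ is the $p$-adic valuation of $a$; $\mathrm{ord}_p(a)$ is the multiplicative order of $a$ mod $p$. The result is unconditional. *)

theory Defs
  imports "HOL-Analysis.Analysis" "HOL-Number_Theory.Number_Theory"
begin

text \<open>p-adic valuation of a rational number a = n/d (in lowest terms, d > 0);
  by convention the valuation of 0 is 0 (irrelevant here since a \<noteq> 0).\<close>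
definition padic_val_rat :: "nat \<Rightarrow> rat \<Rightarrow> int" where
  "padic_val_rat p a = (let (n, d) = quotient_of a in
     int (multiplicity (int p) n) - int (multiplicity (int p) d))"

text \<open>Multiplicative order of a rational a = n/d modulo p (for p not dividing n d):
  least k \<ge> 1 with (n/d)^k \<equiv> 1 mod p, i.e. n^k \<equiv> d^k mod p.\<close>
definition ord_rat :: "nat \<Rightarrow> rat \<Rightarrow> nat" where
  "ord_rat p a = (let (n, d) = quotient_of a in
     (LEAST k::nat. k \<ge> 1 \<and> [n ^ k = d ^ k] (mod int p)))"

end

theory Submission
  imports Defs "HOL-Computational_Algebra.Squarefree" "HOL-Real_Asymp.Real_Asymp"
begin

text \<open>
  Split the primes \<open>p\<close> according to whether \<open>ord\<^sub>p(a) \<le> \<surd>x / (ln x)\<^sup>3\<close>.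

  A prime of small order divides \<open>n\<^sup>j - d\<^sup>j \<noteq> 0\<close> for some \<open>j \<le> \<surd>x / (ln x)\<^sup>3\<close>, where \<open>a = n / d\<close>;
  hence there are only \<open>O(x / (ln x)\<^sup>6)\<close> of them, and each index \<open>(p - 1) / ord\<^sub>p(a) \<le> x\<close> has at most
  \<open>log\<^sub>2 x\<close> prime power divisors.

  For a prime of large order, \<open>q\<^sup>k\<close> dividing the index forces \<open>p \<equiv> 1 (mod q\<^sup>k)\<close> and
  \<open>q\<^sup>k < x / ord\<^sub>p(a) \<le> \<surd>x (ln x)\<^sup>3\<close>. The Brun--Titchmarsh inequality, proved here with Selberg's
  \<open>\<Lambda>\<^sup>2\<close> sieve, bounds the number of such \<open>p \<le> x\<close> by \<open>O(x / (q\<^sup>k ln x))\<close>, and the sum of \<open>1 / q\<^sup>k\<close>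
  over prime powers in \<open>(\<surd>x / (ln x)\<^sup>B, \<surd>x (ln x)\<^sup>3]\<close> is \<open>O(ln ln x / ln x)\<close> by Chebyshev's bound
  for prime powers, which follows from the same sieve.
\<close>

section \<open>Selberg's sieve weights\<close>

text \<open>For a set \<open>T\<close> of primes, \<open>set_totient T\<close> is Euler's \<open>\<phi>(\<Prod>T)\<close>.\<close>
definition set_totient :: "nat set \<Rightarrow> real" where
  "set_totient T = (\<Prod>l\<in>T. real l - 1)"

lemma set_totient_ge_1: "finite T \<Longrightarrow> \<forall>l\<in>T. l \<ge> 2 \<Longrightarrow> set_totient T \<ge> 1"
  unfolding set_totient_def by (rule prod_ge_1) auto

lemma real_prod_eq_sum_set_totient:
  assumes "finite A"
  shows "real (\<Prod>A) = (\<Sum>U\<in>Pow A. set_totient U)"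
proof -
  have "real (\<Prod>A) = (\<Prod>l\<in>A. (real l - 1) + 1)" by simp
  also have "\<dots> = (\<Sum>U\<in>Pow A. (\<Prod>l\<in>U. real l - 1) * (\<Prod>l\<in>A - U. 1))"
    by (rule prod_add[OF assms])
  finally show ?thesis by (simp add: set_totient_def)
qed

lemma sum_Pow_minus_one_power:
  assumes "finite C"
  shows "(\<Sum>V\<in>Pow C. (-1::real) ^ card V) = (if C = {} then 1 else 0)"
proof -
  have "(\<Sum>V\<in>Pow C. (-1::real) ^ card V) = (\<Sum>V\<in>Pow C. (\<Prod>x\<in>V. -1) * (\<Prod>x\<in>C - V. 1))"
    by simp
  also have "\<dots> = (\<Prod>x\<in>C. (-1::real) + 1)"
    by (rule prod_add[OF assms, symmetric])
  finally show ?thesis using assms by (auto simp: card_gt_0_iff)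
qed

lemma sum_between_minus_one_power:
  assumes "finite T" "U \<subseteq> T"
  shows "(\<Sum>S\<in>{S. U \<subseteq> S \<and> S \<subseteq> T}. (-1::real) ^ card (T - S)) = (if U = T then 1 else 0)"
proof -
  have "(\<Sum>S\<in>{S. U \<subseteq> S \<and> S \<subseteq> T}. (-1::real) ^ card (T - S)) =
        (\<Sum>V\<in>Pow (T - U). (-1::real) ^ card V)"
    by (rule sum.reindex_bij_witness[where i = "\<lambda>V. T - V" and j = "\<lambda>S. T - S"])
       (use assms in auto)
  also have "\<dots> = (if U = T then 1 else 0)"
    using assms by (subst sum_Pow_minus_one_power) auto
  finally show ?thesis .
qed

lemma moebius_inversion_downclosed:
  fixes TT :: "'a set set" and y :: "'a set \<Rightarrow> real"
  assumes fin: "finite TT" and sets: "\<And>T. T \<in> TT \<Longrightarrow> finite T"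
    and down: "\<And>T S. T \<in> TT \<Longrightarrow> S \<subseteq> T \<Longrightarrow> S \<in> TT" and U: "U \<in> TT"
  shows "(\<Sum>S\<in>{S\<in>TT. U \<subseteq> S}. \<Sum>T\<in>{T\<in>TT. S \<subseteq> T}. (-1) ^ card (T - S) * y T) = y U"
proof -
  have inner: "(\<Sum>S\<in>{S\<in>{S\<in>TT. U \<subseteq> S}. S \<subseteq> T}. (-1) ^ card (T - S) * y T) =
               (if T = U then y U else 0)" if T: "T \<in> TT" for T
  proof (cases "U \<subseteq> T")
    case True
    have "{S\<in>{S\<in>TT. U \<subseteq> S}. S \<subseteq> T} = {S. U \<subseteq> S \<and> S \<subseteq> T}"
      using down[OF T] by auto
    then show ?thesis
      using sum_between_minus_one_power[OF sets[OF T] True]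
      by (auto simp: sum_distrib_right[symmetric])
  next
    case False
    then have empty: "{S\<in>{S\<in>TT. U \<subseteq> S}. S \<subseteq> T} = {}" and "T \<noteq> U" by auto
    then show ?thesis unfolding empty by simp
  qed
  have "(\<Sum>S\<in>{S\<in>TT. U \<subseteq> S}. \<Sum>T\<in>{T\<in>TT. S \<subseteq> T}. (-1) ^ card (T - S) * y T) =
        (\<Sum>T\<in>TT. \<Sum>S\<in>{S\<in>{S\<in>TT. U \<subseteq> S}. S \<subseteq> T}. (-1) ^ card (T - S) * y T)"
    using fin by (subst sum.swap_restrict) auto
  also have "\<dots> = (\<Sum>T\<in>TT. if T = U then y U else 0)"
    by (rule sum.cong[OF refl inner])
  also have "\<dots> = y U"
    using U fin by (simp add: sum.delta')
  finally show ?thesis .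
qed

lemma inverse_real_prod_union:
  fixes S T :: "nat set"
  assumes "finite S" "finite T" "0 \<notin> S" "0 \<notin> T"
  shows "1 / real (\<Prod>(S \<union> T)) = (\<Sum>U\<in>Pow (S \<inter> T). set_totient U) / (real (\<Prod>S) * real (\<Prod>T))"
proof -
  have "real (\<Prod>(S \<union> T)) * real (\<Prod>(S \<inter> T)) = real (\<Prod>S) * real (\<Prod>T)"
    using prod.union_inter[OF assms(1,2), of "\<lambda>l. l"] by (metis of_nat_mult)
  moreover have "real (\<Prod>A) > 0" if "finite A" "0 \<notin> A" for A :: "nat set"
    using that by (auto intro!: prod_pos intro: gr0I)
  ultimately show ?thesis
    using assms real_prod_eq_sum_set_totient[of "S \<inter> T"] by (simp add: field_simps)
qed

lemma sum_sum_if_subset_eq_square: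
  fixes TT :: "'a set set" and b :: "'a set \<Rightarrow> real"
  assumes "finite TT"
  shows "(\<Sum>S\<in>TT. \<Sum>T\<in>TT. if U \<subseteq> S \<and> U \<subseteq> T then c * b S * b T else 0) =
         c * (\<Sum>S\<in>{S\<in>TT. U \<subseteq> S}. b S)\<^sup>2"
proof -
  have "(\<Sum>S\<in>TT. \<Sum>T\<in>TT. if U \<subseteq> S \<and> U \<subseteq> T then c * b S * b T else 0) =
        (\<Sum>S\<in>TT. \<Sum>T\<in>TT. c * ((if U \<subseteq> S then b S else 0) * (if U \<subseteq> T then b T else 0)))"
    by (intro sum.cong refl) auto
  also have "\<dots> = c * ((\<Sum>S\<in>TT. if U \<subseteq> S then b S else 0) * (\<Sum>T\<in>TT. if U \<subseteq> T then b T else 0))"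
    unfolding sum_product by (simp only: sum_distrib_left)
  also have "\<dots> = c * (\<Sum>S\<in>{S\<in>TT. U \<subseteq> S}. b S)\<^sup>2"
    using assms by (simp only: sum.inter_filter power2_eq_square)
  finally show ?thesis .
qed

text \<open>Selberg's diagonalisation of the quadratic form: \<open>1 / [S, T] = \<Sum>\<^sub>U\<^sub>|\<^sub>(\<^sub>S\<^sub>,\<^sub>T\<^sub>) \<phi>(U) / (S T)\<close>.\<close>
lemma selberg_quadratic_form_diagonal:
  fixes TT :: "nat set set" and c :: "nat set \<Rightarrow> real"
  assumes fin: "finite TT" and sets: "\<And>T. T \<in> TT \<Longrightarrow> finite T \<and> 0 \<notin> T"
    and down: "\<And>T S. T \<in> TT \<Longrightarrow> S \<subseteq> T \<Longrightarrow> S \<in> TT"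
  shows "(\<Sum>S\<in>TT. \<Sum>T\<in>TT. c S * c T / real (\<Prod>(S \<union> T))) =
         (\<Sum>U\<in>TT. set_totient U * (\<Sum>S\<in>{S\<in>TT. U \<subseteq> S}. c S / real (\<Prod>S))\<^sup>2)"
proof -
  define b where "b S = c S / real (\<Prod>S)" for S
  have reciprocal_union: "c S * c T / real (\<Prod>(S \<union> T)) =
              (\<Sum>U\<in>TT. if U \<subseteq> S \<and> U \<subseteq> T then set_totient U * b S * b T else 0)"
    if S: "S \<in> TT" and T: "T \<in> TT" for S T
  proof -
    have "(\<Sum>U\<in>Pow (S \<inter> T). set_totient U) = (\<Sum>U\<in>TT. if U \<subseteq> S \<and> U \<subseteq> T then set_totient U else 0)"
      using fin by (subst sum.If_cases) (auto intro!: sum.cong dest: down[OF S])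
    then have inverse: "1 / real (\<Prod>(S \<union> T)) =
        (\<Sum>U\<in>TT. if U \<subseteq> S \<and> U \<subseteq> T then set_totient U else 0) / (real (\<Prod>S) * real (\<Prod>T))"
      using inverse_real_prod_union sets S T by simp
    have rescale: "c S * c T * (X / (real (\<Prod>S) * real (\<Prod>T))) = b S * b T * X" for X
      by (simp add: b_def)
    have "c S * c T / real (\<Prod>(S \<union> T)) = c S * c T * (1 / real (\<Prod>(S \<union> T)))"
      by simp
    also have "\<dots> = b S * b T * (\<Sum>U\<in>TT. if U \<subseteq> S \<and> U \<subseteq> T then set_totient U else 0)"
      unfolding inverse by (rule rescale)
    also have "\<dots> = (\<Sum>U\<in>TT. if U \<subseteq> S \<and> U \<subseteq> T then set_totient U * b S * b T else 0)"
      by (auto simp: sum_distrib_left intro!: sum.cong)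
    finally show ?thesis .
  qed
  have "(\<Sum>S\<in>TT. \<Sum>T\<in>TT. c S * c T / real (\<Prod>(S \<union> T))) =
        (\<Sum>S\<in>TT. \<Sum>T\<in>TT. \<Sum>U\<in>TT. if U \<subseteq> S \<and> U \<subseteq> T then set_totient U * b S * b T else 0)"
    by (intro sum.cong refl reciprocal_union)
  also have "\<dots> = (\<Sum>U\<in>TT. \<Sum>S\<in>TT. \<Sum>T\<in>TT.
                      if U \<subseteq> S \<and> U \<subseteq> T then set_totient U * b S * b T else 0)"
    by (subst sum.swap) (subst (2) sum.swap, rule refl)
  also have "\<dots> = (\<Sum>U\<in>TT. set_totient U * (\<Sum>S\<in>{S\<in>TT. U \<subseteq> S}. b S)\<^sup>2)"
    by (intro sum.cong refl sum_sum_if_subset_eq_square fin)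
  finally show ?thesis by (simp add: b_def)
qed

definition selberg_G :: "nat set set \<Rightarrow> real" where
  "selberg_G TT = (\<Sum>T\<in>TT. 1 / set_totient T)"

text \<open>Selberg's optimal weights: \<open>w\<^sub>S / S = \<Sum>\<^sub>T\<^sub>\<supseteq>\<^sub>S \<mu>(T / S) y\<^sub>T\<close> with \<open>y\<^sub>T = \<mu>(T) / (\<phi>(T) G)\<close>.\<close>
definition selberg_weight :: "nat set set \<Rightarrow> nat set \<Rightarrow> real" where
  "selberg_weight TT S = real (\<Prod>S) *
     (\<Sum>T\<in>{T\<in>TT. S \<subseteq> T}. (-1) ^ card (T - S) * ((-1) ^ card T / (set_totient T * selberg_G TT)))"

context
  fixes TT :: "nat set set"
  assumes finite_TT: "finite TT" and TT_sets: "\<forall>T\<in>TT. finite T \<and> (\<forall>l\<in>T. l \<ge> 2)"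
    and TT_down: "\<forall>T\<in>TT. \<forall>S\<subseteq>T. S \<in> TT" and empty_in_TT: "{} \<in> TT"
begin

lemma set_totient_member_ge_1: "T \<in> TT \<Longrightarrow> set_totient T \<ge> 1"
  using TT_sets set_totient_ge_1 by blast

lemma selberg_G_ge_1: "selberg_G TT \<ge> 1"
proof -
  have "1 / set_totient {} \<le> selberg_G TT"
    unfolding selberg_G_def using empty_in_TT finite_TT set_totient_member_ge_1
    by (intro member_le_sum) (auto intro: order.trans[OF zero_le_one])
  then show ?thesis by (simp add: set_totient_def)
qed

lemma selberg_weight_inversion:
  assumes "U \<in> TT"
  shows "(\<Sum>S\<in>{S\<in>TT. U \<subseteq> S}. selberg_weight TT S / real (\<Prod>S)) =
         (-1) ^ card U / (set_totient U * selberg_G TT)"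
proof -
  have "real (\<Prod>S) > 0" if "S \<in> TT" for S
    using TT_sets that by (fastforce intro!: prod_pos)
  then have "(\<Sum>S\<in>{S\<in>TT. U \<subseteq> S}. selberg_weight TT S / real (\<Prod>S)) =
        (\<Sum>S\<in>{S\<in>TT. U \<subseteq> S}. \<Sum>T\<in>{T\<in>TT. S \<subseteq> T}.
           (-1) ^ card (T - S) * ((-1) ^ card T / (set_totient T * selberg_G TT)))"
    by (intro sum.cong refl) (force simp: selberg_weight_def)
  also have "\<dots> = (-1) ^ card U / (set_totient U * selberg_G TT)"
    using finite_TT TT_sets TT_down assms by (intro moebius_inversion_downclosed) auto
  finally show ?thesis .
qed

lemma selberg_weight_empty: "selberg_weight TT {} = 1"
proof -
  have "selberg_weight TT {} = (\<Sum>T\<in>TT. 1 / set_totient T) / selberg_G TT"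
    by (simp add: selberg_weight_def sum_divide_distrib flip: power_add)
  then show ?thesis
    using selberg_G_ge_1 by (simp add: selberg_G_def)
qed

lemma selberg_weight_quadratic_form:
  "(\<Sum>S\<in>TT. \<Sum>T\<in>TT. selberg_weight TT S * selberg_weight TT T / real (\<Prod>(S \<union> T))) = 1 / selberg_G TT"
proof -
  have "(\<Sum>S\<in>TT. \<Sum>T\<in>TT. selberg_weight TT S * selberg_weight TT T / real (\<Prod>(S \<union> T))) =
        (\<Sum>U\<in>TT. set_totient U * (\<Sum>S\<in>{S\<in>TT. U \<subseteq> S}. selberg_weight TT S / real (\<Prod>S))\<^sup>2)"
    using TT_sets TT_down by (intro selberg_quadratic_form_diagonal[OF finite_TT]) fastforce+
  also have "\<dots> = (\<Sum>U\<in>TT. 1 / set_totient U) / (selberg_G TT)\<^sup>2"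
    unfolding sum_divide_distrib
  proof (intro sum.cong refl)
    fix U assume "U \<in> TT"
    then show "set_totient U * (\<Sum>S\<in>{S\<in>TT. U \<subseteq> S}. selberg_weight TT S / real (\<Prod>S))\<^sup>2 =
               1 / set_totient U / (selberg_G TT)\<^sup>2"
      using set_totient_member_ge_1[of U] selberg_G_ge_1
      by (subst selberg_weight_inversion) (simp_all add: power_divide power2_eq_square flip: power_add)
  qed
  also have "\<dots> = 1 / selberg_G TT"
    using selberg_G_ge_1 by (simp add: selberg_G_def power2_eq_square)
  finally show ?thesis .
qed

lemma abs_selberg_weight_le:
  assumes "S \<in> TT"
  shows "\<bar>selberg_weight TT S\<bar> \<le> real (\<Prod>S) * card TT"
proof -
  define y where "y T = (-1) ^ card T / (set_totient T * selberg_G TT)" for T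
  have y: "\<bar>y T\<bar> \<le> 1" if "T \<in> TT" for T
    using set_totient_member_ge_1[OF that] selberg_G_ge_1
    by (simp add: y_def abs_mult field_simps) (metis mult_mono' mult_1 zero_le_one)
  have "\<bar>\<Sum>T\<in>{T\<in>TT. S \<subseteq> T}. (-1) ^ card (T - S) * y T\<bar> \<le> (\<Sum>T\<in>{T\<in>TT. S \<subseteq> T}. 1)"
    by (rule order.trans[OF sum_abs]) (intro sum_mono, simp add: abs_mult y)
  also have "\<dots> \<le> card TT"
    using finite_TT by (simp add: card_mono)
  finally show ?thesis
    using TT_sets assms by (simp add: selberg_weight_def y_def abs_mult mult_left_mono prod_nonneg)
qed

end

lemma prime_factors_prod_primes:
  fixes T :: "nat set"
  assumes "finite T" "\<forall>l\<in>T. prime l"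
  shows "prime_factors (\<Prod>T) = T"
proof -
  have "0 \<notin> (\<lambda>l. l) ` T" using assms(2) by auto
  then show ?thesis
    using prime_factors_prod[OF assms(1), of "\<lambda>l. l"] assms(2) by (auto simp: prime_prime_factors)
qed

lemma prime_dvd_prod_primes_iff:
  fixes T :: "nat set"
  assumes "finite T" "\<forall>l\<in>T. prime l" "prime p"
  shows "p dvd \<Prod>T \<longleftrightarrow> p \<in> T"
proof -
  have "\<Prod>T \<noteq> 0" using assms(1,2) by auto
  then have "p \<in> prime_factors (\<Prod>T) \<longleftrightarrow> p dvd \<Prod>T"
    using assms(3) by (simp add: in_prime_factors_iff)
  then show ?thesis
    unfolding prime_factors_prod_primes[OF assms(1,2)] by blast
qed

lemma inj_on_prod_primes: "inj_on (\<lambda>T. \<Prod>T) {T :: nat set. finite T \<and> (\<forall>l\<in>T. prime l)}"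
  by (rule inj_onI) (metis (mono_tags, lifting) mem_Collect_eq prime_factors_prod_primes)

lemma prod_primes_dvd_iff:
  fixes T :: "nat set"
  assumes "finite T" "\<forall>l\<in>T. prime l"
  shows "\<Prod>T dvd n \<longleftrightarrow> (\<forall>l\<in>T. l dvd n)"
  using assms
proof (induction T rule: finite_induct)
  case (insert a T)
  then have "\<not> a dvd \<Prod>T"
    by (subst prime_dvd_prod_primes_iff) auto
  then have "coprime a (\<Prod>T)"
    using insert.prems by (auto intro: prime_imp_coprime)
  then have "a * \<Prod>T dvd n \<longleftrightarrow> a dvd n \<and> \<Prod>T dvd n"
    by (metis divides_mult dvd_mult_left dvd_mult_right)
  with insert show ?case by simp
qed simp

lemma squarefree_eq_prod_prime_factors:
  fixes n :: nat
  assumes "squarefree n"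
  shows "\<Prod>(prime_factors n) = n"
proof -
  have "n \<noteq> 0" using assms by (metis not_squarefree_0)
  have "n = (\<Prod>p\<in>prime_factors n. p ^ multiplicity p n)"
    by (rule prime_factorization_nat) (use \<open>n \<noteq> 0\<close> in simp)
  also have "\<dots> = \<Prod>(prime_factors n)"
    using assms \<open>n \<noteq> 0\<close> by (intro prod.cong refl) (auto simp: squarefree_factorial_semiring')
  finally show ?thesis by simp
qed

lemma prime_power_square_squarefree_decomposition:
  fixes n q :: nat
  assumes q: "prime q" and n: "n > 0"
  obtains i s T where "finite T" "\<forall>l\<in>T. prime l \<and> l \<noteq> q" "s > 0" "n = q ^ i * s\<^sup>2 * \<Prod>T"
proof -
  have "n \<noteq> 0" "\<not> is_unit q" using n q not_prime_unit by auto
  then obtain r where r: "n = q ^ multiplicity q n * r" "\<not> q dvd r"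
    by (rule multiplicity_decompose')
  define T where "T = prime_factors (squarefree_part r)"
  have "r = \<Prod>T * (square_part r)\<^sup>2"
    unfolding T_def by (simp add: squarefree_eq_prod_prime_factors flip: squarefree_decompose)
  moreover have "q \<notin> T"
  proof
    assume "q \<in> T"
    then have "q dvd squarefree_part r" by (simp add: T_def in_prime_factors_imp_dvd)
    then have "q dvd r" by (subst squarefree_decompose) simp
    with r(2) show False ..
  qed
  moreover have "square_part r > 0"
    using r n by (auto intro: gr0I)
  ultimately show ?thesis
    using that[of T "square_part r" "multiplicity q n"] r(1) by (auto simp: T_def mult_ac)
qed

section \<open>Counting in arithmetic progressions\<close>

lemma card_mod_eq_upper:
  fixes M m r :: nat
  assumes "m > 0"
  shows "real (card {t\<in>{1..M}. t mod m = r}) \<le> real M / m + 1"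
proof -
  let ?A = "{t\<in>{1..M}. t mod m = r}"
  have "inj_on (\<lambda>t. t div m) ?A"
    by (rule inj_onI) (metis (mono_tags, lifting) div_mult_mod_eq mem_Collect_eq)
  moreover have "(\<lambda>t. t div m) ` ?A \<subseteq> {0..M div m}"
    by (auto intro: div_le_mono)
  ultimately have "card ?A \<le> Suc (M div m)"
    using card_inj_on_le[of _ ?A "{0..M div m}"] by simp
  moreover have "real (M div m) \<le> real M / m" by (rule of_nat_div_le_of_nat)
  ultimately show ?thesis by linarith
qed

lemma card_mod_eq_lower:
  fixes M m r :: nat
  assumes "r < m"
  shows "real (card {t\<in>{1..M}. t mod m = r}) \<ge> real M / m - 2"
proof -
  let ?A = "{t\<in>{1..M}. t mod m = r}"
  have "(\<lambda>j. j * m + r) ` {1..M div m - 1} \<subseteq> ?A"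
  proof (rule image_subsetI)
    fix j assume "j \<in> {1..M div m - 1}"
    then have j: "1 \<le> j" "j \<le> M div m - 1" by auto
    have "j * m + r < (j + 1) * m" using assms by simp
    also have "\<dots> \<le> M div m * m" using j by (intro mult_right_mono) auto
    also have "\<dots> \<le> M" by simp
    finally have "j * m + r \<le> M" by simp
    moreover have "1 \<le> j * m + r" using j assms by (simp add: Suc_le_eq)
    ultimately show "j * m + r \<in> ?A" using assms by simp
  qed
  moreover have "inj_on (\<lambda>j. j * m + r) {1..M div m - 1}"
    using assms by (intro inj_onI) simp
  ultimately have "M div m - 1 \<le> card ?A"
    using card_inj_on_le[of _ "{1..M div m - 1}" ?A] by simp
  moreover have "real M / m - 1 \<le> real (M div m)"
  proof -
    have "real M = real (M div m) * m + real (M mod m)"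
      by (metis of_nat_add of_nat_mult div_mult_mod_eq)
    moreover have "real (M mod m) < m" using assms by simp
    ultimately show ?thesis using assms by (simp add: field_simps)
  qed
  ultimately show ?thesis by linarith
qed

text \<open>Multiples of \<open>l\<close> in the class \<open>1 mod m\<close> are the \<open>l t\<close> with \<open>t \<equiv> l\<^sup>-\<^sup>1 mod m\<close>.\<close>
lemma card_cong_1_dvd_eq_card_mod_eq:
  fixes m l N :: nat
  assumes "m > 0" "l > 0" "coprime l m"
  obtains r where "r < m"
    "card {n\<in>{1..N}. [n = 1] (mod m) \<and> l dvd n} = card {t\<in>{1..N div l}. t mod m = r}"
proof -
  obtain c where c: "[l * c = 1] (mod m)"
    using cong_solve_coprime_nat[OF assms(3)] by auto
  define r where "r = c mod m"
  have inverse: "[l * t = 1] (mod m) \<longleftrightarrow> t mod m = r" for t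
  proof
    assume "[l * t = 1] (mod m)"
    then have "[c * (l * t) = c] (mod m)"
      using cong_scalar_left by fastforce
    moreover have "[c * (l * t) = t] (mod m)"
      using cong_scalar_right[OF c, of t] by (simp add: mult_ac)
    ultimately show "t mod m = r"
      unfolding r_def cong_def by metis
  next
    assume "t mod m = r"
    then have "[l * t = l * c] (mod m)"
      unfolding r_def cong_def by (metis mod_mult_right_eq)
    then show "[l * t = 1] (mod m)"
      using c by (rule cong_trans)
  qed
  have range: "l * t \<in> {1..N} \<longleftrightarrow> t \<in> {1..N div l}" for t
    using assms(2) by (auto simp: less_eq_div_iff_mult_less_eq mult.commute)
  have "{n\<in>{1..N}. [n = 1] (mod m) \<and> l dvd n} = (\<lambda>t. l * t) ` {t\<in>{1..N div l}. t mod m = r}"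
  proof (intro equalityI subsetI)
    fix n assume n: "n \<in> {n\<in>{1..N}. [n = 1] (mod m) \<and> l dvd n}"
    then obtain t where t: "n = l * t" by (auto elim: dvdE)
    show "n \<in> (\<lambda>t. l * t) ` {t\<in>{1..N div l}. t mod m = r}"
      by (rule image_eqI[where x = t]) (use n range[of t] inverse[of t] t in auto)
  next
    fix n assume "n \<in> (\<lambda>t. l * t) ` {t\<in>{1..N div l}. t mod m = r}"
    then obtain t where "t \<in> {1..N div l}" "t mod m = r" "n = l * t" by auto
    then show "n \<in> {n\<in>{1..N}. [n = 1] (mod m) \<and> l dvd n}"
      using range[of t] inverse[of t] by auto
  qed
  moreover have "inj_on (\<lambda>t. l * t) {t\<in>{1..N div l}. t mod m = r}"
    using assms(2) by (intro inj_onI) simp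
  ultimately show ?thesis
    using that[of r] assms(1) by (simp add: r_def card_image)
qed

lemma card_cong_1_dvd_approx:
  fixes m l :: nat and x :: real
  assumes "m > 0" "l > 0" "coprime l m" "x \<ge> 0"
  shows "\<bar>real (card {n\<in>{1..nat \<lfloor>x\<rfloor>}. [n = 1] (mod m) \<and> l dvd n}) - x / (m * l)\<bar> \<le> 4"
proof -
  define N where "N = nat \<lfloor>x\<rfloor>"
  define M where "M = N div l"
  obtain r where "r < m" and card: "card {n\<in>{1..N}. [n = 1] (mod m) \<and> l dvd n} = card {t\<in>{1..M}. t mod m = r}"
    using card_cong_1_dvd_eq_card_mod_eq[OF assms(1-3)] unfolding M_def by blast
  have "real N \<le> x" "x - 1 \<le> real N"
    using assms(4) unfolding N_def by linarith+
  moreover have "real M \<le> real N / l"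
    unfolding M_def by (rule of_nat_div_le_of_nat)
  moreover have "real N / l - 1 \<le> real M"
  proof -
    have "real N = real M * l + real (N mod l)"
      unfolding M_def by (metis of_nat_add of_nat_mult div_mult_mod_eq)
    moreover have "real (N mod l) < l" using assms(2) by simp
    ultimately show ?thesis using assms(2) by (simp add: field_simps)
  qed
  ultimately have "real M \<le> x / l" "x / l - 2 \<le> real M"
    using assms(2) by (auto simp: field_simps)
  have "real M / m \<le> x / (m * l)"
    using divide_right_mono[OF \<open>real M \<le> x / l\<close>, of "real m"] by (simp add: mult.commute)
  moreover have "x / (m * l) - 2 \<le> real M / m"
  proof -
    have "(x / l - 2) / m = x / (m * l) - 2 / m"
      by (simp add: diff_divide_distrib mult.commute)
    moreover have "2 / real m \<le> 2"
      using assms(1) by (simp add: field_simps)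
    moreover have "(x / l - 2) / m \<le> real M / m"
      using \<open>x / l - 2 \<le> real M\<close> by (simp add: divide_right_mono)
    ultimately show ?thesis by linarith
  qed
  ultimately show ?thesis
    using card_mod_eq_upper[OF assms(1), of M r] card_mod_eq_lower[OF \<open>r < m\<close>, of M]
    unfolding card N_def[symmetric] by (simp add: abs_le_iff)
qed

section \<open>Selberg's sieve for primes in the class \<open>1 mod q\<^sup>k\<close>\<close>

lemma sum_inverse_squares_le_2: "(\<Sum>s\<in>{1..N}. 1 / (real s)\<^sup>2) \<le> 2"
proof -
  have "(\<Sum>s\<in>{1..N}. 1 / (real s)\<^sup>2) \<le> 2 - 1 / real N" if "N \<ge> 1" for N
    using that
  proof (induction N rule: dec_induct)
    case (step n)
    have "1 / (real n + 1)\<^sup>2 \<le> 1 / (real n * (real n + 1))"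
      using step.hyps by (intro divide_left_mono) (auto simp: power2_eq_square intro!: mult_right_mono)
    also have "\<dots> = 1 / real n - 1 / (real n + 1)"
      using step.hyps by (simp add: field_simps)
    finally show ?case
      using step.IH by (simp add: add.commute)
  qed simp
  then show ?thesis
    by (cases "N = 0") (simp, smt (verit) of_nat_0_le_iff divide_nonneg_nonneg less_one not_less)
qed

lemma geometric_sum_inverse_le_2:
  fixes q :: real
  assumes "q \<ge> 2"
  shows "(\<Sum>i<Z. (1 / q) ^ i) \<le> 2"
proof -
  have "(\<Sum>i<Z. (1 / q) ^ i) = (1 - (1 / q) ^ Z) / (1 - 1 / q)"
    using assms by (subst sum_gp_strict) auto
  also have "\<dots> \<le> 1 / (1 - 1 / q)"
    using assms by (intro divide_right_mono) auto
  also have "\<dots> \<le> 2"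
    using assms by (simp add: field_simps)
  finally show ?thesis .
qed

text \<open>The squarefree \<open>d \<le> z\<close> coprime to \<open>q\<close>, each represented by its set of prime factors.\<close>
definition sieve_sets :: "nat \<Rightarrow> real \<Rightarrow> nat set set" where
  "sieve_sets q z = {T. T \<subseteq> {l. prime l \<and> real l \<le> z \<and> l \<noteq> q} \<and> real (\<Prod>T) \<le> z}"

lemma sieve_sets_subset_Pow: "sieve_sets q z \<subseteq> Pow {..nat \<lfloor>z\<rfloor>}"
  unfolding sieve_sets_def by (auto intro: le_nat_floor)

lemma finite_sieve_sets: "finite (sieve_sets q z)"
  by (rule finite_subset[OF sieve_sets_subset_Pow]) simp

lemma sieve_sets_memD:
  assumes "T \<in> sieve_sets q z"
  shows "finite T" "\<forall>l\<in>T. prime l \<and> l \<noteq> q" "real (\<Prod>T) \<le> z"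
  using assms sieve_sets_subset_Pow[of q z] finite_subset[of T "{..nat \<lfloor>z\<rfloor>}"]
  unfolding sieve_sets_def by auto

lemma sieve_sets_downclosed:
  assumes "T \<in> sieve_sets q z" "S \<subseteq> T"
  shows "S \<in> sieve_sets q z"
proof -
  have "\<Prod>S dvd \<Prod>T" "\<Prod>T > 0"
    using sieve_sets_memD[OF assms(1)] assms(2) by (auto intro: prod_dvd_prod_subset prime_gt_0_nat)
  then have "real (\<Prod>S) \<le> real (\<Prod>T)" by (simp only: of_nat_le_iff dvd_imp_le)
  then have "real (\<Prod>S) \<le> z" using sieve_sets_memD(3)[OF assms(1)] by linarith
  then show ?thesis
    using assms unfolding sieve_sets_def by auto
qed

lemma empty_in_sieve_sets: "z \<ge> 1 \<Longrightarrow> {} \<in> sieve_sets q z"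
  by (simp add: sieve_sets_def)

lemma card_sieve_sets_le:
  assumes "z \<ge> 0"
  shows "real (card (sieve_sets q z)) \<le> z"
proof -
  have "inj_on (\<lambda>T. \<Prod>T) (sieve_sets q z)"
    by (rule inj_on_subset[OF inj_on_prod_primes]) (auto dest: sieve_sets_memD)
  moreover have "\<Prod>T \<in> {1..nat \<lfloor>z\<rfloor>}" if "T \<in> sieve_sets q z" for T
  proof -
    note T = sieve_sets_memD[OF that]
    have "\<Prod>T > 0" using T(2) by (intro prod_pos) (auto intro: prime_gt_0_nat)
    with le_nat_floor[OF T(3)] show ?thesis by simp
  qed
  ultimately have "card (sieve_sets q z) \<le> nat \<lfloor>z\<rfloor>"
    using card_inj_on_le[of "\<lambda>T. \<Prod>T" "sieve_sets q z" "{1..nat \<lfloor>z\<rfloor>}"] by (simp add: image_subset_iff)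
  then show ?thesis
    using assms by linarith
qed

lemma atLeastAtMost_subset_image_sieve_sets:
  fixes q :: nat and z :: real
  assumes q: "prime q" and z: "z \<ge> 1"
  shows "{1..nat \<lfloor>z\<rfloor>} \<subseteq> (\<lambda>(i, s, T). q ^ i * s\<^sup>2 * \<Prod>T) ` ({..<nat \<lfloor>z\<rfloor>} \<times> {1..nat \<lfloor>z\<rfloor>} \<times> sieve_sets q z)"
proof
  fix n assume n: "n \<in> {1..nat \<lfloor>z\<rfloor>}"
  then have "n > 0" by simp
  then obtain i s T where T: "finite T" "\<forall>l\<in>T. prime l \<and> l \<noteq> q" and "s > 0"
    and decomp: "n = q ^ i * s\<^sup>2 * \<Prod>T"
    by (rule prime_power_square_squarefree_decomposition[OF q])
  have "q ^ i \<le> n" "s\<^sup>2 \<le> n" "\<Prod>T \<le> n"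
    using n unfolding decomp by (auto intro!: dvd_imp_le)
  moreover have "i < q ^ i"
    using prime_ge_2_nat[OF q] less_exp[of i] power_mono[of 2 q i] by linarith
  moreover have "s \<le> s\<^sup>2" by (simp add: power2_eq_square)
  moreover have "l \<le> \<Prod>T" if "l \<in> T" for l
    using that T by (intro dvd_imp_le) (auto intro: dvd_prodI[of T l "\<lambda>l. l", simplified] prime_gt_0_nat)
  ultimately have "i < nat \<lfloor>z\<rfloor>" "s \<in> {1..nat \<lfloor>z\<rfloor>}" "\<forall>l\<in>T. l \<le> nat \<lfloor>z\<rfloor>" "\<Prod>T \<le> nat \<lfloor>z\<rfloor>"
    using n \<open>s > 0\<close> by fastforce+
  moreover have "m \<le> nat \<lfloor>z\<rfloor> \<longleftrightarrow> real m \<le> z" for m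
    using z by (simp add: le_nat_iff le_floor_iff)
  ultimately have "(i, s, T) \<in> {..<nat \<lfloor>z\<rfloor>} \<times> {1..nat \<lfloor>z\<rfloor>} \<times> sieve_sets q z"
    using T unfolding sieve_sets_def by auto
  then show "n \<in> (\<lambda>(i, s, T). q ^ i * s\<^sup>2 * \<Prod>T) ` ({..<nat \<lfloor>z\<rfloor>} \<times> {1..nat \<lfloor>z\<rfloor>} \<times> sieve_sets q z)"
    unfolding decomp by force
qed

text \<open>Since every \<open>n \<le> z\<close> is some \<open>q\<^sup>i s\<^sup>2 \<Prod>T\<close>, the sum \<open>ln z \<le> \<Sum>\<^sub>n\<^sub>\<le>\<^sub>z 1/n\<close> is at most
  \<open>(\<Sum> q\<^sup>-\<^sup>i) (\<Sum> s\<^sup>-\<^sup>2) (\<Sum>\<^sub>T 1/\<Prod>T) \<le> 4 \<Sum>\<^sub>T 1/\<phi>(T)\<close>.\<close>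
lemma sum_inverse_set_totient_ge_ln:
  fixes q :: nat and z :: real
  assumes q: "prime q" and z: "z \<ge> 1"
  shows "ln z / 4 \<le> selberg_G (sieve_sets q z)"
proof -
  define TT where "TT = sieve_sets q z"
  define Z where "Z = nat \<lfloor>z\<rfloor>"
  define D where "D = {..<Z} \<times> {1..Z} \<times> TT"
  define f where "f = (\<lambda>(i, s, T). q ^ i * s\<^sup>2 * \<Prod>T)"
  have "finite D" by (simp add: D_def TT_def finite_sieve_sets)
  have "z < real Z + 1"
    using z unfolding Z_def by linarith
  then have "ln z \<le> (\<Sum>n\<in>{1..Z}. 1 / real n)"
    using ln_le_harm[of Z] z by (simp add: harm_def divide_inverse) (smt (verit) ln_le_cancel_iff)
  also have "\<dots> \<le> (\<Sum>n\<in>f ` D. 1 / real n)"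
    using atLeastAtMost_subset_image_sieve_sets[OF q z] \<open>finite D\<close>
    unfolding D_def f_def Z_def TT_def by (intro sum_mono2) auto
  also have "\<dots> \<le> (\<Sum>(i, s, T)\<in>D. 1 / real (f (i, s, T)))"
    using sum_image_le[of D "\<lambda>n. 1 / real n" f] \<open>finite D\<close> by (simp add: o_def case_prod_beta)
  also have "\<dots> = (\<Sum>i<Z. \<Sum>s\<in>{1..Z}. \<Sum>T\<in>TT. (1 / real q) ^ i * (1 / (real s)\<^sup>2 * (1 / real (\<Prod>T))))"
    unfolding D_def f_def sum.cartesian_product by (simp add: power_divide mult.assoc)
  also have "\<dots> = (\<Sum>i<Z. (1 / real q) ^ i) * ((\<Sum>s\<in>{1..Z}. 1 / (real s)\<^sup>2) * (\<Sum>T\<in>TT. 1 / real (\<Prod>T)))"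
    unfolding sum_product by (simp only: sum_distrib_left)
  also have "\<dots> \<le> 2 * (2 * (\<Sum>T\<in>TT. 1 / set_totient T))"
  proof (intro mult_mono sum_mono sum_nonneg)
    fix T assume "T \<in> TT"
    then have "finite T" "\<forall>l\<in>T. l \<ge> 2"
      using sieve_sets_memD prime_ge_2_nat unfolding TT_def by blast+
    then have "set_totient T \<le> real (\<Prod>T)" "set_totient T \<ge> 1"
      using set_totient_ge_1 by (auto simp: set_totient_def intro!: prod_mono)
    then show "1 / real (\<Prod>T) \<le> 1 / set_totient T"
      by (intro divide_left_mono) auto
  qed (use prime_ge_2_nat[OF q] sum_inverse_squares_le_2[of Z] in
        \<open>auto intro!: geometric_sum_inverse_le_2 sum_nonneg mult_nonneg_nonneg prod_nonneg\<close>)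
  finally show ?thesis by (simp add: TT_def selberg_G_def)
qed

lemma mult_le_mult_add_of_abs_diff_le:
  fixes a b c e :: real
  assumes "\<bar>a - b\<bar> \<le> e"
  shows "c * a \<le> c * b + e * \<bar>c\<bar>"
proof (cases "c \<ge> 0")
  case True
  then have "c * (a - b) \<le> c * e" using assms by (intro mult_left_mono) auto
  with True show ?thesis by (simp add: algebra_simps)
next
  case False
  then have "- c * (b - a) \<le> - c * e" using assms by (intro mult_left_mono) auto
  with False show ?thesis by (simp add: algebra_simps)
qed

lemma sum_square_sieve_weight_eq:
  fixes TT :: "nat set set" and w :: "nat set \<Rightarrow> real" and A :: "nat set"
  assumes "finite A" and sets: "\<And>T. T \<in> TT \<Longrightarrow> finite T \<and> (\<forall>l\<in>T. prime l)"
  shows "(\<Sum>n\<in>A. (\<Sum>T\<in>TT. if \<Prod>T dvd n then w T else 0)\<^sup>2) =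
         (\<Sum>S\<in>TT. \<Sum>T\<in>TT. w S * w T * real (card {n\<in>A. \<Prod>(S \<union> T) dvd n}))"
proof -
  have union_dvd: "\<Prod>(S \<union> T) dvd n \<longleftrightarrow> \<Prod>S dvd n \<and> \<Prod>T dvd n" if "S \<in> TT" "T \<in> TT" for S T n
    using sets[OF that(1)] sets[OF that(2)] by (simp add: prod_primes_dvd_iff ball_Un)
  have "(\<Sum>T\<in>TT. if \<Prod>T dvd n then w T else 0)\<^sup>2 =
        (\<Sum>S\<in>TT. \<Sum>T\<in>TT. if \<Prod>(S \<union> T) dvd n then w S * w T else 0)" for n
    unfolding power2_eq_square sum_product by (intro sum.cong refl) (simp add: union_dvd)
  then have "(\<Sum>n\<in>A. (\<Sum>T\<in>TT. if \<Prod>T dvd n then w T else 0)\<^sup>2) =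
             (\<Sum>S\<in>TT. \<Sum>T\<in>TT. \<Sum>n\<in>A. if \<Prod>(S \<union> T) dvd n then w S * w T else 0)"
    by (simp add: sum.swap[of _ A])
  also have "\<dots> = (\<Sum>S\<in>TT. \<Sum>T\<in>TT. w S * w T * real (card {n\<in>A. \<Prod>(S \<union> T) dvd n}))"
    using assms(1) by (intro sum.cong refl) (simp add: sum.inter_filter[symmetric])
  finally show ?thesis .
qed

text \<open>The \<open>\<Lambda>\<^sup>2\<close> inequality: the weight \<open>(\<Sum>\<^sub>T\<^sub>|\<^sub>n w\<^sub>T)\<^sup>2\<close> is nonnegative, and it equals
  \<open>w({})\<^sup>2 = 1\<close> on every sifted \<open>n\<close>.\<close>
lemma selberg_sieve_upper_bound:
  fixes TT :: "nat set set" and w :: "nat set \<Rightarrow> real" and P :: "nat set" and x :: real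
  assumes fin: "finite TT" and sets: "\<And>T. T \<in> TT \<Longrightarrow> finite T \<and> (\<forall>l\<in>T. prime l \<and> coprime l m)"
    and "m > 0" "x \<ge> 0" "{} \<in> TT" "w {} = 1"
    and P: "P \<subseteq> {n\<in>{1..nat \<lfloor>x\<rfloor>}. [n = 1] (mod m)}"
    and sifted: "\<And>n T. n \<in> P \<Longrightarrow> T \<in> TT \<Longrightarrow> \<Prod>T dvd n \<Longrightarrow> T = {}"
  shows "real (card P) \<le> x / m * (\<Sum>S\<in>TT. \<Sum>T\<in>TT. w S * w T / real (\<Prod>(S \<union> T)))
                           + 4 * (\<Sum>S\<in>TT. \<bar>w S\<bar>)\<^sup>2"
proof -
  define A where "A = {n\<in>{1..nat \<lfloor>x\<rfloor>}. [n = 1] (mod m)}"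
  define c where "c S T = real (card {n\<in>A. \<Prod>(S \<union> T) dvd n})" for S T
  have "(\<Sum>T\<in>TT. if \<Prod>T dvd n then w T else 0) = 1" if "n \<in> P" for n
  proof -
    have "(\<Sum>T\<in>TT. if \<Prod>T dvd n then w T else 0) = (\<Sum>T\<in>TT. if T = {} then w T else 0)"
      using sifted[OF that] by (intro sum.cong) auto
    with fin assms(5,6) show ?thesis by (simp add: sum.delta')
  qed
  then have "real (card P) = (\<Sum>n\<in>P. (\<Sum>T\<in>TT. if \<Prod>T dvd n then w T else 0)\<^sup>2)" by simp
  also have "\<dots> \<le> (\<Sum>n\<in>A. (\<Sum>T\<in>TT. if \<Prod>T dvd n then w T else 0)\<^sup>2)"
    using P by (intro sum_mono2) (auto simp: A_def)
  also have "\<dots> = (\<Sum>S\<in>TT. \<Sum>T\<in>TT. w S * w T * c S T)"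
    unfolding c_def using sets by (intro sum_square_sieve_weight_eq) (auto simp: A_def)
  also have "\<dots> \<le> (\<Sum>S\<in>TT. \<Sum>T\<in>TT. w S * w T * (x / (m * real (\<Prod>(S \<union> T)))) + 4 * (\<bar>w S\<bar> * \<bar>w T\<bar>))"
  proof (intro sum_mono)
    fix S T assume "S \<in> TT" "T \<in> TT"
    then have "finite (S \<union> T)" "\<forall>l\<in>S \<union> T. prime l \<and> coprime l m"
      using sets by auto
    then have "\<Prod>(S \<union> T) > 0" "coprime (\<Prod>(S \<union> T)) m"
      by (auto intro!: prod_pos prod_coprime_left prime_gt_0_nat)
    from card_cong_1_dvd_approx[OF \<open>m > 0\<close> this \<open>x \<ge> 0\<close>]
    have "\<bar>c S T - x / (m * real (\<Prod>(S \<union> T)))\<bar> \<le> 4"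
      unfolding c_def A_def by simp
    then show "w S * w T * c S T \<le> w S * w T * (x / (m * real (\<Prod>(S \<union> T)))) + 4 * (\<bar>w S\<bar> * \<bar>w T\<bar>)"
      by (auto dest: mult_le_mult_add_of_abs_diff_le[where c = "w S * w T"] simp: abs_mult)
  qed
  also have "\<dots> = x / m * (\<Sum>S\<in>TT. \<Sum>T\<in>TT. w S * w T / real (\<Prod>(S \<union> T))) + 4 * (\<Sum>S\<in>TT. \<bar>w S\<bar>)\<^sup>2"
    by (simp add: sum.distrib sum_distrib_left power2_eq_square sum_product field_simps)
  finally show ?thesis .
qed

lemma finite_nat_real_le: "finite {m::nat. P m \<and> real m \<le> X}"
  by (rule finite_subset[of _ "{..nat \<lfloor>X\<rfloor>}"]) (auto simp: le_nat_floor)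

lemma card_primes_le_real:
  assumes "z \<ge> 0"
  shows "real (card {p. prime p \<and> real p \<le> z}) \<le> z"
proof -
  have "{p. prime p \<and> real p \<le> z} \<subseteq> {1..nat \<lfloor>z\<rfloor>}"
    by (auto simp: le_nat_floor Suc_le_eq prime_gt_0_nat)
  then have "card {p. prime p \<and> real p \<le> z} \<le> nat \<lfloor>z\<rfloor>"
    using card_mono[of "{1..nat \<lfloor>z\<rfloor>}"] by fastforce
  then show ?thesis
    using assms by linarith
qed

context
  fixes q :: nat and z :: real
  assumes z: "z \<ge> 1"
begin

lemma selberg_conditions_sieve_sets:
  "finite (sieve_sets q z)" "\<forall>T\<in>sieve_sets q z. finite T \<and> (\<forall>l\<in>T. l \<ge> 2)"
  "\<forall>T\<in>sieve_sets q z. \<forall>S\<subseteq>T. S \<in> sieve_sets q z" "{} \<in> sieve_sets q z"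
  using sieve_sets_memD[of _ q z] prime_ge_2_nat z
  by (auto simp: finite_sieve_sets empty_in_sieve_sets intro: sieve_sets_downclosed)

lemma sum_abs_selberg_weight_sieve_sets_le:
  "(\<Sum>S\<in>sieve_sets q z. \<bar>selberg_weight (sieve_sets q z) S\<bar>) \<le> z ^ 3"
proof -
  have "(\<Sum>S\<in>sieve_sets q z. \<bar>selberg_weight (sieve_sets q z) S\<bar>) \<le> (\<Sum>S\<in>sieve_sets q z. z * z)"
  proof (rule sum_mono)
    fix S assume "S \<in> sieve_sets q z"
    then have "\<bar>selberg_weight (sieve_sets q z) S\<bar> \<le> real (\<Prod>S) * card (sieve_sets q z)" "real (\<Prod>S) \<le> z"
      using abs_selberg_weight_le[OF selberg_conditions_sieve_sets] sieve_sets_memD by auto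
    with card_sieve_sets_le[of z q] z show "\<bar>selberg_weight (sieve_sets q z) S\<bar> \<le> z * z"
      by (smt (verit) mult_mono of_nat_0_le_iff)
  qed
  also have "\<dots> \<le> z ^ 3"
    using card_sieve_sets_le[of z q] z by (simp add: power3_eq_cube mult_right_mono)
  finally show ?thesis .
qed

end

text \<open>Selberg's sieve with level \<open>z\<close>: sifting by the primes \<open>l \<le> z\<close>, \<open>l \<noteq> q\<close>, leaves the primes
  \<open>p > z\<close>, and the optimal weights give main term \<open>x / (q\<^sup>k G) \<le> 4 x / (q\<^sup>k ln z)\<close>.\<close>
lemma card_large_primes_cong_1_le:
  fixes q k :: nat and x z :: real
  assumes q: "prime q" and x: "x \<ge> 0" and z: "z \<ge> 2"
  shows "real (card {p. prime p \<and> real p \<le> x \<and> [p = 1] (mod q ^ k) \<and> z < real p})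
           \<le> x / real (q ^ k) * (4 / ln z) + 4 * z ^ 6"
proof -
  define m where "m = q ^ k"
  define TT where "TT = sieve_sets q z"
  define w where "w = selberg_weight TT"
  have "m > 0" using q by (simp add: m_def prime_gt_0_nat)
  have "z \<ge> 1" using z by simp
  note selberg = selberg_conditions_sieve_sets[where q = q and z = z, OF \<open>z \<ge> 1\<close>]
  have "ln z / 4 \<le> selberg_G TT"
    unfolding TT_def using q z by (intro sum_inverse_set_totient_ge_ln) auto
  moreover have "ln z > 0"
    using z by simp
  ultimately have "1 / selberg_G TT \<le> 1 / (ln z / 4)"
    by (intro divide_left_mono) auto
  then have Q: "(\<Sum>S\<in>TT. \<Sum>T\<in>TT. w S * w T / real (\<Prod>(S \<union> T))) \<le> 4 / ln z"
    using selberg_weight_quadratic_form[OF selberg] unfolding TT_def w_def by simp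
  have "(\<Sum>S\<in>TT. \<bar>w S\<bar>)\<^sup>2 \<le> (z ^ 3)\<^sup>2"
    using sum_abs_selberg_weight_sieve_sets_le[where q = q and z = z] z unfolding TT_def w_def
    by (intro power_mono sum_nonneg) auto
  then have w_sum: "(\<Sum>S\<in>TT. \<bar>w S\<bar>)\<^sup>2 \<le> z ^ 6"
    by (simp flip: power_mult)
  have "real (card {p. prime p \<and> real p \<le> x \<and> [p = 1] (mod m) \<and> z < real p})
        \<le> x / m * (\<Sum>S\<in>TT. \<Sum>T\<in>TT. w S * w T / real (\<Prod>(S \<union> T))) + 4 * (\<Sum>S\<in>TT. \<bar>w S\<bar>)\<^sup>2"
  proof (rule selberg_sieve_upper_bound)
    fix T assume "T \<in> TT"
    then show "finite T \<and> (\<forall>l\<in>T. prime l \<and> coprime l m)"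
      using q sieve_sets_memD[of T q z] by (auto simp: TT_def m_def primes_coprime)
  next
    show "{p. prime p \<and> real p \<le> x \<and> [p = 1] (mod m) \<and> z < real p} \<subseteq> {n\<in>{1..nat \<lfloor>x\<rfloor>}. [n = 1] (mod m)}"
      by (auto simp: le_nat_floor Suc_le_eq prime_gt_0_nat)
  next
    fix p T assume p: "p \<in> {p. prime p \<and> real p \<le> x \<and> [p = 1] (mod m) \<and> z < real p}"
      and "T \<in> TT" and dvd: "\<Prod>T dvd p"
    then have T: "finite T" "\<forall>l\<in>T. prime l" "real (\<Prod>T) < real p"
      using sieve_sets_memD[of T q z] unfolding TT_def by force+
    then have "\<Prod>T = 1"
      using dvd p by (auto simp: prime_nat_iff)
    then show "T = {}"
      using prime_factors_prod_primes[OF T(1,2)] by simp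
  qed (use z \<open>m > 0\<close> x selberg selberg_weight_empty[OF selberg] in \<open>auto simp: TT_def w_def\<close>)
  then show ?thesis
    using Q w_sum x \<open>m > 0\<close> unfolding m_def by (smt (verit) mult_left_mono divide_nonneg_nonneg of_nat_0_le_iff)
qed

lemma card_primes_cong_1_le_sieve:
  fixes q k :: nat and x z :: real
  assumes q: "prime q" and x: "x \<ge> 0" and z: "z \<ge> 2"
  shows "real (card {p. prime p \<and> real p \<le> x \<and> [p = 1] (mod q ^ k)})
           \<le> z + 4 * (x / real (q ^ k)) / ln z + 4 * z ^ 6"
proof -
  define P where "P = {p. prime p \<and> real p \<le> x \<and> [p = 1] (mod q ^ k)}"
  have "real (card {p\<in>P. real p \<le> z}) \<le> real (card {p. prime p \<and> real p \<le> z})"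
    by (intro of_nat_mono card_mono finite_nat_real_le) (auto simp: P_def)
  also have "\<dots> \<le> z"
    using z by (intro card_primes_le_real) auto
  finally have small: "real (card {p\<in>P. real p \<le> z}) \<le> z" .
  have "P = {p\<in>P. real p \<le> z} \<union> {p\<in>P. z < real p}" by auto
  then have "card P \<le> card {p\<in>P. real p \<le> z} + card {p\<in>P. z < real p}"
    by (metis card_Un_le)
  then have "real (card P) \<le> real (card {p\<in>P. real p \<le> z}) + real (card {p\<in>P. z < real p})"
    by (metis of_nat_add of_nat_le_iff)
  moreover have "x / real (q ^ k) * (4 / ln z) = 4 * (x / real (q ^ k)) / ln z" by simp
  moreover have "real (card {p\<in>P. z < real p}) \<le> x / real (q ^ k) * (4 / ln z) + 4 * z ^ 6"
    using card_large_primes_cong_1_le[OF q x z, of k] by (simp add: P_def conj_ac)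
  ultimately show ?thesis
    using small unfolding P_def by linarith
qed

section \<open>Brun--Titchmarsh and counting prime powers\<close>

lemma card_primes_cong_1_le_powr:
  fixes q k :: nat and X :: real
  assumes q: "prime q" and X: "X \<ge> 128"
  shows "real (card {p. prime p \<and> real p \<le> X * real (q ^ k) \<and> [p = 1] (mod q ^ k)})
           \<le> X powr (1/7) + 28 * X / ln X + 4 * X powr (6/7)"
proof -
  define z where "z = X powr (1/7)"
  have "(2::real) = 128 powr (1/7)"
    by (simp add: powr_powr flip: powr_numeral)
  also have "\<dots> \<le> z"
    unfolding z_def using X by (intro powr_mono2) auto
  finally have z: "z \<ge> 2" .
  have "real (q ^ k) > 0" using q by (simp add: prime_gt_0_nat)
  then have "real (card {p. prime p \<and> real p \<le> X * real (q ^ k) \<and> [p = 1] (mod q ^ k)})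
        \<le> z + 4 * X / ln z + 4 * z ^ 6"
    using card_primes_cong_1_le_sieve[OF q _ z, of "X * real (q ^ k)" k] X by simp
  also have "ln z = ln X / 7"
    using X by (simp add: z_def ln_powr)
  also have "z ^ 6 = X powr (6/7)"
    using X by (simp add: z_def powr_powr flip: powr_realpow)
  finally show ?thesis
    by (simp add: z_def)
qed

lemma eventually_card_primes_cong_1_le:
  "eventually (\<lambda>X. \<forall>q k. prime q \<longrightarrow>
     real (card {p. prime p \<and> real p \<le> X * real (q ^ k) \<and> [p = 1] (mod q ^ k)}) \<le> 29 * X / ln X) at_top"
proof -
  have "eventually (\<lambda>X::real. X powr (1/7) + 4 * X powr (6/7) \<le> X / ln X) at_top"
    by real_asymp
  moreover have "eventually (\<lambda>X::real. X \<ge> 128) at_top"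
    by (rule eventually_ge_at_top)
  ultimately show ?thesis
  proof eventually_elim
    case (elim X)
    show ?case
      using card_primes_cong_1_le_powr[OF _ elim(2)] elim(1) by (smt (verit, best) add_divide_distrib)
  qed
qed

lemma brun_titchmarsh_prime_power:
  "eventually (\<lambda>x. \<forall>q k. prime q \<longrightarrow> real (q ^ k) \<le> x powr (2/3) \<longrightarrow>
     real (card {p. prime p \<and> real p \<le> x \<and> [p = 1] (mod q ^ k)}) \<le> 87 * x / (real (q ^ k) * ln x)) at_top"
proof -
  obtain X0 where X0: "\<And>X q k. X \<ge> X0 \<Longrightarrow> prime q \<Longrightarrow>
      real (card {p. prime p \<and> real p \<le> X * real (q ^ k) \<and> [p = 1] (mod q ^ k)}) \<le> 29 * X / ln X"
    using eventually_card_primes_cong_1_le by (auto simp: eventually_at_top_linorder)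
  define c where "c = max X0 2"
  have "eventually (\<lambda>x::real. x powr (1/3) \<ge> c) at_top"
    by real_asymp
  then have "eventually (\<lambda>x::real. x powr (1/3) \<ge> max X0 2 \<and> x \<ge> 2) at_top"
    using eventually_ge_at_top[of 2] unfolding c_def by eventually_elim simp
  then show ?thesis
  proof (rule eventually_mono, intro allI impI)
    fix x :: real and q k :: nat
    assume x: "max X0 2 \<le> x powr (1/3) \<and> x \<ge> 2" and q: "prime q" and small: "real (q ^ k) \<le> x powr (2/3)"
    define X where "X = x / real (q ^ k)"
    have "real (q ^ k) > 0" using q by (simp add: prime_gt_0_nat)
    have "x powr (1/3) = x powr (1 - 2/3)" by simp
    also have "\<dots> = x / x powr (2/3)"
      using x by (subst powr_diff) auto
    also have "\<dots> \<le> X"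
      unfolding X_def using small x \<open>real (q ^ k) > 0\<close> by (intro divide_left_mono) auto
    finally have X: "x powr (1/3) \<le> X" .
    then have "ln (x powr (1/3)) \<le> ln X"
      using x by (subst ln_le_cancel_iff) auto
    then have "ln x / 3 \<le> ln X"
      using x by (simp add: ln_powr)
    moreover have "ln x > 0" "X \<ge> max X0 2" using x X by auto
    moreover have "X * real (q ^ k) = x"
      using \<open>real (q ^ k) > 0\<close> by (simp add: X_def)
    ultimately have "real (card {p. prime p \<and> real p \<le> x \<and> [p = 1] (mod q ^ k)}) \<le> 29 * X / ln X"
      using X0[of X q k] q by auto
    also have "\<dots> \<le> 29 * X / (ln x / 3)"
      using \<open>ln x / 3 \<le> ln X\<close> \<open>ln x > 0\<close> \<open>X \<ge> max X0 2\<close> by (intro divide_left_mono) auto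
    also have "\<dots> = 87 * x / (real (q ^ k) * ln x)"
      using \<open>real (q ^ k) > 0\<close> by (simp add: X_def field_simps)
    finally show "real (card {p. prime p \<and> real p \<le> x \<and> [p = 1] (mod q ^ k)}) \<le> 87 * x / (real (q ^ k) * ln x)" .
  qed
qed

lemma card_primepow_not_prime_le:
  fixes X :: real
  assumes X: "X \<ge> 1"
  shows "real (card {m::nat. primepow m \<and> \<not> prime m \<and> real m \<le> X}) \<le> (sqrt X + 1) * (log 2 X + 1)"
proof -
  define S where "S = nat \<lfloor>sqrt X\<rfloor>"
  define K where "K = nat \<lfloor>log 2 X\<rfloor>"
  have "{m::nat. primepow m \<and> \<not> prime m \<and> real m \<le> X} \<subseteq> (\<lambda>(p, k). p ^ k) ` ({..S} \<times> {..K})"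
  proof
    fix m assume m: "m \<in> {m::nat. primepow m \<and> \<not> prime m \<and> real m \<le> X}"
    then obtain p k where pk: "prime p" "k > 0" "m = p ^ k"
      unfolding primepow_def by auto
    then have "k \<ge> 2" using m by (cases "k = 1") auto
    have "p \<ge> 2" using prime_ge_2_nat[OF pk(1)] .
    have "real p ^ 2 \<le> real p ^ k" "(2::real) ^ k \<le> real p ^ k"
      using \<open>k \<ge> 2\<close> \<open>p \<ge> 2\<close> by (auto intro: power_increasing power_mono)
    moreover have "real p ^ k \<le> X" using m pk(3) by simp
    ultimately have "real p \<le> sqrt X" "real k \<le> log 2 X"
      using X by (auto simp: real_le_rsqrt le_log_iff powr_realpow)
    then have "p \<le> S" "k \<le> K"
      unfolding S_def K_def by (auto simp: le_nat_floor)
    then show "m \<in> (\<lambda>(p, k). p ^ k) ` ({..S} \<times> {..K})"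
      using pk(3) by force
  qed
  then have "card {m::nat. primepow m \<and> \<not> prime m \<and> real m \<le> X} \<le> card ({..S} \<times> {..K})"
    by (meson card_image_le card_mono finite_SigmaI finite_atMost finite_imageI order_trans)
  then have "card {m::nat. primepow m \<and> \<not> prime m \<and> real m \<le> X} \<le> (S + 1) * (K + 1)"
    by (simp add: card_cartesian_product)
  then have "real (card {m::nat. primepow m \<and> \<not> prime m \<and> real m \<le> X}) \<le> real ((S + 1) * (K + 1))"
    by (simp only: of_nat_le_iff)
  also have "\<dots> = (real S + 1) * (real K + 1)"
    by (simp add: algebra_simps)
  also have "\<dots> \<le> (sqrt X + 1) * (log 2 X + 1)"
    using X unfolding S_def K_def by (intro mult_mono add_mono of_nat_floor) auto
  finally show ?thesis .
qed

lemma eventually_card_primepow_le: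
  "eventually (\<lambda>X. real (card {m::nat. primepow m \<and> real m \<le> X}) \<le> 30 * X / ln X) at_top"
proof -
  have "eventually (\<lambda>X::real. (sqrt X + 1) * (log 2 X + 1) \<le> X / ln X) at_top"
    by real_asymp
  moreover note eventually_card_primes_cong_1_le eventually_ge_at_top[of 1]
  ultimately show ?thesis
  proof eventually_elim
    case (elim X)
    have "{p. prime p \<and> real p \<le> X * real (2 ^ 0) \<and> [p = 1] (mod 2 ^ 0)} = {p. prime p \<and> real p \<le> X}"
      by simp
    then have primes: "real (card {p. prime p \<and> real p \<le> X}) \<le> 29 * X / ln X"
      using elim(2)[rule_format, of 2 0] by simp
    have split: "{m. primepow m \<and> real m \<le> X} =
          {p. prime p \<and> real p \<le> X} \<union> {m. primepow m \<and> \<not> prime m \<and> real m \<le> X}"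
      by (auto simp: primepow_prime)
    have "card {m. primepow m \<and> real m \<le> X} \<le>
          card {p. prime p \<and> real p \<le> X} + card {m. primepow m \<and> \<not> prime m \<and> real m \<le> X}"
      unfolding split by (rule card_Un_le)
    then have "real (card {m. primepow m \<and> real m \<le> X}) \<le>
               real (card {p. prime p \<and> real p \<le> X}) + real (card {m. primepow m \<and> \<not> prime m \<and> real m \<le> X})"
      by linarith
    moreover have "29 * X / ln X + X / ln X = 30 * X / ln X"
      by (simp add: add_divide_distrib[symmetric])
    ultimately show ?case
      using primes card_primepow_not_prime_le[OF elim(3)] elim(1) by linarith
  qed
qed

lemma sum_inverse_primepow_dyadic_le:
  fixes T :: real
  assumes T: "T \<ge> 2"
    and count: "\<And>X. X \<ge> T \<Longrightarrow> real (card {m::nat. primepow m \<and> real m \<le> X}) \<le> 30 * X / ln X"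
  shows "(\<Sum>m\<in>{m::nat. primepow m \<and> T < real m \<and> real m \<le> 2 ^ J * T}. 1 / real m) \<le> real J * 60 / ln T"
proof -
  let ?S = "\<lambda>A B. (\<Sum>m\<in>{m::nat. primepow m \<and> A < real m \<and> real m \<le> B}. 1 / real m)"
  have "ln T > 0" using T by simp
  have block: "?S V (2 * V) \<le> 60 / ln T" if "V \<ge> T" for V
  proof -
    have "?S V (2 * V) \<le> (\<Sum>m\<in>{m::nat. primepow m \<and> V < real m \<and> real m \<le> 2 * V}. 1 / V)"
      using T that by (intro sum_mono divide_left_mono) auto
    also have "\<dots> \<le> real (card {m::nat. primepow m \<and> real m \<le> 2 * V}) / V"
      using T that by (auto intro!: divide_right_mono card_mono finite_nat_real_le)
    also have "\<dots> \<le> 30 * (2 * V) / ln (2 * V) / V"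
      using T that count[of "2 * V"] by (intro divide_right_mono) auto
    also have "\<dots> \<le> 60 / ln T"
      using T that \<open>ln T > 0\<close> by (auto simp: field_simps intro!: mult_left_mono)
    finally show ?thesis .
  qed
  show ?thesis
  proof (induction J)
    case (Suc J)
    have "T \<le> 2 ^ J * T" using T by simp
    then have "{m::nat. primepow m \<and> T < real m \<and> real m \<le> 2 ^ Suc J * T} =
        {m. primepow m \<and> T < real m \<and> real m \<le> 2 ^ J * T} \<union>
        {m. primepow m \<and> 2 ^ J * T < real m \<and> real m \<le> 2 * (2 ^ J * T)}"
      by auto
    then have "?S T (2 ^ Suc J * T) = ?S T (2 ^ J * T) + ?S (2 ^ J * T) (2 * (2 ^ J * T))"
      by (simp only:) (rule sum.union_disjoint; auto intro: finite_subset[OF _ finite_nat_real_le])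
    also have "\<dots> \<le> J * 60 / ln T + 60 / ln T"
      using Suc.IH block[OF \<open>T \<le> 2 ^ J * T\<close>] by linarith
    finally show ?case by (simp add: add_divide_distrib)
  qed (simp add: not_less[symmetric])
qed

lemma eventually_sum_inverse_primepow_le:
  "eventually (\<lambda>T. \<forall>U\<ge>T.
     (\<Sum>m\<in>{m::nat. primepow m \<and> T < real m \<and> real m \<le> U}. 1 / real m) \<le> 60 * (log 2 (U / T) + 1) / ln T) at_top"
proof -
  obtain X0 where X0: "\<And>X. X \<ge> X0 \<Longrightarrow> real (card {m::nat. primepow m \<and> real m \<le> X}) \<le> 30 * X / ln X"
    using eventually_card_primepow_le by (auto simp: eventually_at_top_linorder)
  have "(\<Sum>m\<in>{m::nat. primepow m \<and> T < real m \<and> real m \<le> U}. 1 / real m) \<le> 60 * (log 2 (U / T) + 1) / ln T"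
    if T: "T \<ge> max X0 2" and "U \<ge> T" for T U
  proof -
    define J where "J = nat \<lceil>log 2 (U / T)\<rceil>"
    have "log 2 (U / T) \<ge> 0" using T \<open>U \<ge> T\<close> by simp
    then have J: "log 2 (U / T) \<le> J" "J \<le> log 2 (U / T) + 1"
      unfolding J_def by linarith+
    have "U / T \<le> 2 powr J"
      using J(1) T \<open>U \<ge> T\<close> by (simp add: log_le_iff)
    then have "U \<le> 2 ^ J * T"
      using T by (simp add: powr_realpow field_simps)
    then have "(\<Sum>m\<in>{m::nat. primepow m \<and> T < real m \<and> real m \<le> U}. 1 / real m)
               \<le> (\<Sum>m\<in>{m::nat. primepow m \<and> T < real m \<and> real m \<le> 2 ^ J * T}. 1 / real m)"
      by (intro sum_mono2) (auto intro: finite_subset[OF _ finite_nat_real_le])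
    also have "\<dots> \<le> real J * 60 / ln T"
      using T X0 by (intro sum_inverse_primepow_dyadic_le) auto
    also have "\<dots> \<le> 60 * (log 2 (U / T) + 1) / ln T"
      using J(2) T by (intro divide_right_mono) auto
    finally show ?thesis .
  qed
  then show ?thesis
    unfolding eventually_at_top_linorder by blast
qed

lemma eventually_sum_inverse_primepow_window_le:
  assumes B: "B \<ge> 0"
  shows "eventually (\<lambda>x.
    (\<Sum>m\<in>{m::nat. primepow m \<and> sqrt x / ln x powr B < real m \<and> real m \<le> sqrt x * ln x ^ 3}. 1 / real m)
      \<le> 180 * ((B + 3) / ln 2 + 1) * ln (ln x) / ln x) at_top"
proof -
  obtain T0 where T0: "\<And>T U. T \<ge> T0 \<Longrightarrow> U \<ge> T \<Longrightarrow>
      (\<Sum>m\<in>{m::nat. primepow m \<and> T < real m \<and> real m \<le> U}. 1 / real m) \<le> 60 * (log 2 (U / T) + 1) / ln T"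
    using eventually_sum_inverse_primepow_le by (auto simp: eventually_at_top_linorder)
  have "eventually (\<lambda>x. sqrt x / ln x powr B \<ge> x powr (1/3)) at_top"
    using B by real_asymp
  moreover have "eventually (\<lambda>x. x powr (1/3) \<ge> T0) at_top"
    by real_asymp
  moreover have "eventually (\<lambda>x::real. ln (ln x) \<ge> 1) at_top"
    by real_asymp
  moreover note eventually_ge_at_top[of "exp 1"]
  ultimately show ?thesis
  proof eventually_elim
    case (elim x)
    define L where "L = ln x"
    define y where "y = sqrt x / L powr B"
    define Y where "Y = sqrt x * L ^ 3"
    have "x \<ge> 1"
      using elim(4) exp_ge_add_one_self[of 1] by linarith
    then have "L \<ge> 1" "ln L \<ge> 1"
      using elim(3,4) unfolding L_def by (auto simp: ln_ge_iff)
    have "y > 0"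
      using \<open>x \<ge> 1\<close> \<open>L \<ge> 1\<close> unfolding y_def by auto
    have "x powr (1/3) \<le> y"
      using elim(1) unfolding y_def L_def by auto
    then have "T0 \<le> y" "L / 3 \<le> ln y"
      using elim(2) \<open>x \<ge> 1\<close> \<open>y > 0\<close> ln_le_cancel_iff[of "x powr (1/3)" y]
      by (auto simp: L_def ln_powr)
    have "Y / y = L powr (B + 3)"
      using \<open>x \<ge> 1\<close> \<open>L \<ge> 1\<close> by (simp add: Y_def y_def powr_add powr_realpow field_simps)
    then have "y \<le> Y" "log 2 (Y / y) = (B + 3) / ln 2 * ln L"
      using \<open>L \<ge> 1\<close> B \<open>y > 0\<close> by (auto simp: log_def ln_powr field_simps ge_one_powr_ge_zero)
    have "(\<Sum>m\<in>{m::nat. primepow m \<and> y < real m \<and> real m \<le> Y}. 1 / real m) \<le> 60 * (log 2 (Y / y) + 1) / ln y"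
      using T0[OF \<open>T0 \<le> y\<close> \<open>y \<le> Y\<close>] .
    also have "\<dots> \<le> 60 * (((B + 3) / ln 2 + 1) * ln L) / (L / 3)"
      using \<open>log 2 (Y / y) = _\<close> \<open>L / 3 \<le> ln y\<close> \<open>ln L \<ge> 1\<close> \<open>L \<ge> 1\<close> B
      by (intro frac_le) (auto simp: algebra_simps)
    also have "\<dots> = 180 * ((B + 3) / ln 2 + 1) * ln L / L"
      by (simp add: field_simps)
    finally show ?case
      unfolding y_def Y_def L_def .
  qed
qed

section \<open>The order of a rational number modulo a prime\<close>

lemma quotient_of_power_neq:
  assumes a: "a \<notin> {-1, 0, 1}" and q: "quotient_of a = (n, d)" and "j > 0"
  shows "n ^ j \<noteq> d ^ j"
proof
  assume "n ^ j = d ^ j"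
  moreover have "a = of_int n / of_int d" "d > 0"
    using quotient_of_div[OF q] quotient_of_denom_pos[OF q] by auto
  ultimately have "a ^ j = 1"
    by (simp add: power_divide flip: of_int_power)
  then have "\<bar>a\<bar> ^ j = 1 ^ j"
    by (metis abs_one power_abs power_one)
  then have "\<bar>a\<bar> = 1"
    using power_eq_imp_eq_base[of "\<bar>a\<bar>" j 1] \<open>j > 0\<close> by simp
  with a show False
    by (auto simp: abs_if split: if_splits)
qed

lemma quotient_of_numerator_nonzero:
  assumes "a \<noteq> 0" "quotient_of a = (n, d)"
  shows "n \<noteq> 0"
  using assms quotient_of_div[OF assms(2)] by auto

lemma padic_val_rat_eq_0_imp_not_dvd:
  assumes q: "quotient_of a = (n, d)" and "n \<noteq> 0" and p: "prime p" and "padic_val_rat p a = 0"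
  shows "\<not> int p dvd n" "\<not> int p dvd d"
proof -
  have "d > 0" "coprime n d"
    using quotient_of_denom_pos[OF q] quotient_of_coprime[OF q] by auto
  moreover have "multiplicity (int p) n = multiplicity (int p) d"
    using assms(4) q by (simp add: padic_val_rat_def)
  moreover have "\<not> (int p dvd n \<and> int p dvd d)"
    using \<open>coprime n d\<close> p by (metis coprime_common_divisor not_prime_unit prime_nat_int_transfer)
  ultimately show "\<not> int p dvd n" "\<not> int p dvd d"
    using \<open>n \<noteq> 0\<close> p by (auto simp: prime_multiplicity_gt_zero_iff[symmetric])
qed

lemma fermat_theorem_int:
  fixes n :: int
  assumes p: "prime p" and "\<not> int p dvd n"
  shows "[n ^ (p - 1) = 1] (mod int p)"
proof -
  define b where "b = nat (n mod int p)"
  have "int b = n mod int p"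
    using p unfolding b_def by (simp add: prime_gt_0_nat)
  then have "[int b = n] (mod int p)" "\<not> p dvd b"
    using assms(2) by (auto simp: cong_def dvd_mod_iff simp flip: int_dvd_int_iff)
  then have "[int b ^ (p - 1) = 1] (mod int p)" "[int b ^ (p - 1) = n ^ (p - 1)] (mod int p)"
    using fermat_theorem[OF p] by (auto simp flip: cong_int_iff intro: cong_pow)
  then show ?thesis
    by (meson cong_sym cong_trans)
qed

context
  fixes a :: rat and n d :: int and p :: nat
  assumes q: "quotient_of a = (n, d)" and p: "prime p"
    and not_dvd: "\<not> int p dvd n" "\<not> int p dvd d"
begin

lemma ord_rat_least:
  shows "ord_rat p a > 0" "[n ^ ord_rat p a = d ^ ord_rat p a] (mod int p)"
    and "\<And>j. j > 0 \<Longrightarrow> [n ^ j = d ^ j] (mod int p) \<Longrightarrow> ord_rat p a \<le> j"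
proof -
  have ord: "ord_rat p a = (LEAST k. k \<ge> 1 \<and> [n ^ k = d ^ k] (mod int p))"
    using q by (simp add: ord_rat_def)
  have "p - 1 \<ge> 1" using prime_ge_2_nat[OF p] by simp
  moreover have "[n ^ (p - 1) = d ^ (p - 1)] (mod int p)"
    using fermat_theorem_int[OF p] not_dvd by (meson cong_sym cong_trans)
  ultimately have "ord_rat p a \<ge> 1 \<and> [n ^ ord_rat p a = d ^ ord_rat p a] (mod int p)"
    unfolding ord by (rule LeastI[where k = "p - 1", OF conjI])
  then show "ord_rat p a > 0" "[n ^ ord_rat p a = d ^ ord_rat p a] (mod int p)" by auto
  show "ord_rat p a \<le> j" if "j > 0" "[n ^ j = d ^ j] (mod int p)" for j
    unfolding ord using that by (intro Least_le) auto
qed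

lemma ord_rat_dvd_prime_minus_1: "ord_rat p a dvd p - 1"
proof -
  define k where "k = ord_rat p a"
  define r where "r = (p - 1) mod k"
  have "k > 0" "[n ^ k = d ^ k] (mod int p)"
    unfolding k_def by (rule ord_rat_least)+
  have "[n ^ (p - 1) = d ^ (p - 1)] (mod int p)"
    using fermat_theorem_int[OF p] not_dvd by (meson cong_sym cong_trans)
  moreover have "p - 1 = k * ((p - 1) div k) + r"
    unfolding r_def by simp
  ultimately have "[(d ^ k) ^ ((p - 1) div k) * n ^ r = (d ^ k) ^ ((p - 1) div k) * d ^ r] (mod int p)"
    using cong_pow[OF \<open>[n ^ k = d ^ k] (mod int p)\<close>, of "(p - 1) div k"]
    by (metis (no_types, lifting) cong_scalar_right cong_sym cong_trans power_add power_mult)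
  moreover have "coprime d (int p)"
    using not_dvd(2) p by (metis coprime_commute prime_imp_coprime prime_nat_int_transfer)
  then have "coprime ((d ^ k) ^ ((p - 1) div k)) (int p)"
    by simp
  ultimately have "[n ^ r = d ^ r] (mod int p)"
    by (simp add: cong_mult_lcancel)
  have "r = 0"
  proof (rule ccontr)
    assume "r \<noteq> 0"
    then have "k \<le> r"
      using ord_rat_least(3)[of r] \<open>[n ^ r = d ^ r] (mod int p)\<close> unfolding k_def by simp
    moreover have "r < k"
      unfolding r_def using \<open>k > 0\<close> by simp
    ultimately show False by simp
  qed
  then show ?thesis
    unfolding k_def r_def by (simp add: mod_eq_0_iff_dvd)
qed

end

lemma prime_minus_1_div_ord_rat:
  assumes "a \<noteq> 0" "prime p" "padic_val_rat p a = 0"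
  shows "(p - 1) div ord_rat p a * ord_rat p a = p - 1" "(p - 1) div ord_rat p a > 0"
proof -
  obtain n d where q: "quotient_of a = (n, d)" by fastforce
  then have "\<not> int p dvd n" "\<not> int p dvd d"
    using assms quotient_of_numerator_nonzero padic_val_rat_eq_0_imp_not_dvd by blast+
  note ord = ord_rat_least[OF q assms(2) this] ord_rat_dvd_prime_minus_1[OF q assms(2) this]
  then show "(p - 1) div ord_rat p a * ord_rat p a = p - 1" by simp
  moreover have "p - 1 > 0" using prime_ge_2_nat[OF assms(2)] by simp
  ultimately show "(p - 1) div ord_rat p a > 0"
    by (metis gr0I mult_0)
qed

lemma large_ord_rat_dvd_index:
  assumes "a \<noteq> 0" "prime p" "padic_val_rat p a = 0" "real p \<le> x"
    and "0 < z" "z < real (ord_rat p a)" and m: "m dvd (p - 1) div ord_rat p a"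
  shows "[p = 1] (mod m)" "real m < x / z"
proof -
  note index = prime_minus_1_div_ord_rat[OF assms(1-3)]
  have "m dvd p - 1"
    using m index(1) by (metis dvd_mult2)
  then show "[p = 1] (mod m)"
    using prime_ge_2_nat[OF assms(2)] by (simp add: cong_altdef_nat cong_sym_eq)
  have "m * ord_rat p a \<le> p - 1"
    using dvd_imp_le[OF m index(2)] index(1) by (metis mult_le_mono1)
  then have "real m * real (ord_rat p a) < x"
    using assms(4) prime_ge_2_nat[OF assms(2)] by (simp flip: of_nat_mult)
  moreover have "real m * z \<le> real m * real (ord_rat p a)"
    using assms(6) by (simp add: mult_left_mono)
  ultimately show "real m < x / z"
    using assms(5) by (simp add: field_simps)
qed

section \<open>Primes modulo which \<open>a\<close> has small order\<close>

lemma card_primepow_factors_le: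
  fixes N :: nat
  assumes "N > 0"
  shows "real (card (primepow_factors N)) \<le> ln (real N) / ln 2"
proof -
  have "(\<Sum>m\<in>primepow_factors N. ln 2) \<le> (\<Sum>m\<in>primepow_factors N. mangoldt m :: real)"
  proof (rule sum_mono)
    fix m assume "m \<in> primepow_factors N"
    then have "primepow m" by (simp add: primepow_factors_def)
    then have "prime (aprimedivisor m)"
      by (intro prime_aprimedivisor') (auto dest: primepow_gt_Suc_0)
    then have "real (aprimedivisor m) \<ge> 2"
      using prime_ge_2_nat by (metis of_nat_le_iff of_nat_numeral)
    then show "ln 2 \<le> (mangoldt m :: real)"
      using \<open>primepow m\<close> by (simp add: mangoldt_def)
  qed
  also have "\<dots> \<le> (\<Sum>m | m dvd N. mangoldt m :: real)"
    using assms by (intro sum_mono2) (auto simp: primepow_factors_def mangoldt_nonneg)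
  also have "\<dots> = ln (real N)"
    using assms by (simp add: mangoldt_sum)
  finally show ?thesis
    by (simp add: field_simps)
qed

lemma card_prime_factors_le:
  fixes N :: nat
  assumes "N > 0"
  shows "real (card (prime_factors N)) \<le> ln (real N) / ln 2"
proof -
  have "prime_factors N \<subseteq> primepow_factors N"
    by (auto simp: primepow_factors_def primepow_prime in_prime_factors_iff)
  then have "card (prime_factors N) \<le> card (primepow_factors N)"
    using assms by (intro card_mono finite_primepow_factors) auto
  then show ?thesis
    using card_primepow_factors_le[OF assms] by linarith
qed

lemma power_add_power_le:
  fixes a b :: real
  assumes "a \<ge> 0" "b \<ge> 0" "j > 0"
  shows "a ^ j + b ^ j \<le> (a + b) ^ j"
proof -
  obtain i where j: "j = Suc i" using assms(3) by (cases j) auto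
  have "a * a ^ i + b * b ^ i \<le> a * (a + b) ^ i + b * (a + b) ^ i"
    using assms by (intro add_mono mult_left_mono power_mono) auto
  then show ?thesis
    by (simp add: j distrib_right)
qed

lemma card_prime_factors_power_diff_le:
  fixes n d :: int
  assumes "d > 0" "n ^ j \<noteq> d ^ j" "j > 0"
  shows "real (card (prime_factors (nat \<bar>n ^ j - d ^ j\<bar>))) \<le> real j * ln (real_of_int (\<bar>n\<bar> + d)) / ln 2"
proof -
  define H where "H = real_of_int (\<bar>n\<bar> + d)"
  define N where "N = nat \<bar>n ^ j - d ^ j\<bar>"
  have "N > 0" "H \<ge> 1"
    using assms unfolding N_def H_def by auto
  have "real N = \<bar>real_of_int n ^ j - real_of_int d ^ j\<bar>"
    by (simp add: N_def)
  also have "\<dots> \<le> \<bar>real_of_int n\<bar> ^ j + \<bar>real_of_int d\<bar> ^ j"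
    using abs_triangle_ineq4[of "real_of_int n ^ j" "real_of_int d ^ j"] by (simp add: power_abs)
  also have "\<dots> \<le> H ^ j"
    using power_add_power_le[of "\<bar>real_of_int n\<bar>" "\<bar>real_of_int d\<bar>" j] assms by (simp add: H_def)
  finally have "ln (real N) \<le> ln (H ^ j)"
    using \<open>N > 0\<close> \<open>H \<ge> 1\<close> by (subst ln_le_cancel_iff) auto
  then have "ln (real N) / ln 2 \<le> real j * ln H / ln 2"
    using \<open>H \<ge> 1\<close> by (intro divide_right_mono) (simp_all add: ln_realpow)
  with card_prime_factors_le[OF \<open>N > 0\<close>] show ?thesis
    by (simp add: H_def N_def)
qed

lemma primes_small_ord_rat_subset:
  assumes a: "a \<notin> {-1, 0, 1}" and q: "quotient_of a = (n, d)"
  shows "{p. prime p \<and> padic_val_rat p a = 0 \<and> real (ord_rat p a) \<le> z}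
           \<subseteq> (\<Union>j\<in>{1..nat \<lfloor>z\<rfloor>}. prime_factors (nat \<bar>n ^ j - d ^ j\<bar>))"
proof
  fix p assume "p \<in> {p. prime p \<and> padic_val_rat p a = 0 \<and> real (ord_rat p a) \<le> z}"
  then have p: "prime p" "padic_val_rat p a = 0" "real (ord_rat p a) \<le> z" by auto
  have "n \<noteq> 0" using a q quotient_of_numerator_nonzero by auto
  then have "\<not> int p dvd n" "\<not> int p dvd d"
    using padic_val_rat_eq_0_imp_not_dvd[OF q _ p(1,2)] by auto
  note ord = ord_rat_least[OF q p(1) this]
  have "int p dvd int (nat \<bar>n ^ ord_rat p a - d ^ ord_rat p a\<bar>)"
    using ord(2) by (simp add: cong_iff_dvd_diff dvd_diff_commute)
  then have "p \<in> prime_factors (nat \<bar>n ^ ord_rat p a - d ^ ord_rat p a\<bar>)"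
    using p(1) quotient_of_power_neq[OF a q ord(1)] by (simp add: in_prime_factors_iff)
  moreover have "ord_rat p a \<in> {1..nat \<lfloor>z\<rfloor>}"
    using ord(1) p(3) by (auto simp: le_nat_floor)
  ultimately show "p \<in> (\<Union>j\<in>{1..nat \<lfloor>z\<rfloor>}. prime_factors (nat \<bar>n ^ j - d ^ j\<bar>))" by blast
qed

lemma card_primes_small_ord_rat_le:
  fixes a :: rat and z :: real
  assumes a: "a \<notin> {-1, 0, 1}" and q: "quotient_of a = (n, d)" and z: "z \<ge> 0"
  shows "finite {p. prime p \<and> padic_val_rat p a = 0 \<and> real (ord_rat p a) \<le> z}"
    and "real (card {p. prime p \<and> padic_val_rat p a = 0 \<and> real (ord_rat p a) \<le> z})
           \<le> z\<^sup>2 * ln (real_of_int (\<bar>n\<bar> + d)) / ln 2"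
proof -
  define Z where "Z = nat \<lfloor>z\<rfloor>"
  define H where "H = real_of_int (\<bar>n\<bar> + d)"
  define N where "N j = nat \<bar>n ^ j - d ^ j\<bar>" for j
  note sub = primes_small_ord_rat_subset[OF a q, of z, folded Z_def N_def]
  have "d > 0"
    using q by (rule quotient_of_denom_pos)
  then have "H \<ge> 1"
    unfolding H_def by linarith
  show "finite {p. prime p \<and> padic_val_rat p a = 0 \<and> real (ord_rat p a) \<le> z}"
    using sub by (rule finite_subset) auto
  have "card {p. prime p \<and> padic_val_rat p a = 0 \<and> real (ord_rat p a) \<le> z} \<le> card (\<Union>j\<in>{1..Z}. prime_factors (N j))"
    using sub by (intro card_mono) auto
  also have "\<dots> \<le> (\<Sum>j\<in>{1..Z}. card (prime_factors (N j)))"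
    by (rule card_UN_le) simp
  finally have "real (card {p. prime p \<and> padic_val_rat p a = 0 \<and> real (ord_rat p a) \<le> z})
      \<le> (\<Sum>j\<in>{1..Z}. real (card (prime_factors (N j))))"
    by (simp flip: of_nat_sum)
  also have "\<dots> \<le> (\<Sum>j\<in>{1..Z}. real Z * ln H / ln 2)"
  proof (rule sum_mono)
    fix j assume j: "j \<in> {1..Z}"
    then have "real (card (prime_factors (N j))) \<le> real j * ln H / ln 2"
      unfolding N_def H_def using \<open>d > 0\<close> quotient_of_power_neq[OF a q]
      by (intro card_prime_factors_power_diff_le) auto
    also have "\<dots> \<le> real Z * ln H / ln 2"
      using j \<open>H \<ge> 1\<close> by (intro divide_right_mono mult_right_mono) auto
    finally show "real (card (prime_factors (N j))) \<le> real Z * ln H / ln 2" .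
  qed
  also have "\<dots> = (real Z)\<^sup>2 * ln H / ln 2"
    by (simp add: power2_eq_square)
  also have "\<dots> \<le> z\<^sup>2 * ln H / ln 2"
    using z \<open>H \<ge> 1\<close> unfolding Z_def by (intro divide_right_mono mult_right_mono power_mono) auto
  finally show "real (card {p. prime p \<and> padic_val_rat p a = 0 \<and> real (ord_rat p a) \<le> z})
      \<le> z\<^sup>2 * ln (real_of_int (\<bar>n\<bar> + d)) / ln 2"
    by (simp add: H_def)
qed

section \<open>Small and large orders\<close>

lemma sum_card_primepow_dvd_le:
  fixes M S :: "nat set" and f :: "nat \<Rightarrow> nat" and x :: real
  assumes "finite M" "finite S" "\<forall>m\<in>M. primepow m" "\<And>p. p \<in> S \<Longrightarrow> f p > 0 \<and> real (f p) \<le> x"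
  shows "(\<Sum>m\<in>M. real (card {p\<in>S. m dvd f p})) \<le> real (card S) * (ln x / ln 2)"
proof -
  have "(\<Sum>m\<in>M. real (card {p\<in>S. m dvd f p})) = (\<Sum>m\<in>M. \<Sum>p\<in>{p\<in>S. m dvd f p}. 1)"
    by simp
  also have "\<dots> = (\<Sum>p\<in>S. \<Sum>m\<in>{m\<in>M. m dvd f p}. 1)"
    by (rule sum.swap_restrict[OF assms(1,2)])
  also have "\<dots> \<le> (\<Sum>p\<in>S. ln x / ln 2)"
  proof (rule sum_mono)
    fix p assume "p \<in> S"
    then have "f p > 0" "real (f p) \<le> x" using assms(4) by auto
    have "{m\<in>M. m dvd f p} \<subseteq> primepow_factors (f p)"
      using assms(3) by (auto simp: primepow_factors_def)
    then have "card {m\<in>M. m dvd f p} \<le> card (primepow_factors (f p))"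
      using \<open>f p > 0\<close> by (intro card_mono finite_primepow_factors) auto
    also note card_primepow_factors_le[OF \<open>f p > 0\<close>]
    also have "ln (real (f p)) / ln 2 \<le> ln x / ln 2"
      using \<open>f p > 0\<close> \<open>real (f p) \<le> x\<close> by (intro divide_right_mono) auto
    finally show "(\<Sum>m\<in>{m\<in>M. m dvd f p}. 1) \<le> ln x / ln 2"
      by simp
  qed
  finally show ?thesis by simp
qed

lemma sum_card_small_ord_rat_le:
  assumes a: "a \<notin> {-1, 0, 1}" and q: "quotient_of a = (n, d)" and "x \<ge> 1" "z \<ge> 0"
  shows "(\<Sum>m\<in>{m::nat. primepow m \<and> real m \<le> x}.
           real (card {p. prime p \<and> real p \<le> x \<and> padic_val_rat p a = 0 \<and>
                          real (ord_rat p a) \<le> z \<and> m dvd (p - 1) div ord_rat p a}))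
         \<le> z\<^sup>2 * ln (real_of_int (\<bar>n\<bar> + d)) / ln 2 * (ln x / ln 2)"
proof -
  define S where "S = {p. prime p \<and> real p \<le> x \<and> padic_val_rat p a = 0 \<and> real (ord_rat p a) \<le> z}"
  have "S \<subseteq> {p. prime p \<and> padic_val_rat p a = 0 \<and> real (ord_rat p a) \<le> z}"
    by (auto simp: S_def)
  moreover note small = card_primes_small_ord_rat_le[OF a q \<open>z \<ge> 0\<close>]
  ultimately have "finite S" "card S \<le> card {p. prime p \<and> padic_val_rat p a = 0 \<and> real (ord_rat p a) \<le> z}"
    by (auto intro: finite_subset card_mono)
  then have "real (card S) \<le> z\<^sup>2 * ln (real_of_int (\<bar>n\<bar> + d)) / ln 2"
    using small(2) of_nat_mono[of "card S"] by linarith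
  have "(\<Sum>m\<in>{m::nat. primepow m \<and> real m \<le> x}. real (card {p\<in>S. m dvd (p - 1) div ord_rat p a}))
        \<le> real (card S) * (ln x / ln 2)"
  proof (rule sum_card_primepow_dvd_le[OF finite_nat_real_le \<open>finite S\<close>])
    fix p assume "p \<in> S"
    then have "prime p" "padic_val_rat p a = 0" "real p \<le> x" by (auto simp: S_def)
    moreover have "a \<noteq> 0" using a by auto
    moreover have "(p - 1) div ord_rat p a \<le> p" by (meson div_le_dividend diff_le_self order_trans)
    ultimately show "(p - 1) div ord_rat p a > 0 \<and> real ((p - 1) div ord_rat p a) \<le> x"
      using prime_minus_1_div_ord_rat[of a p] by (auto intro: order.trans[OF of_nat_mono])
  qed auto
  also have "\<dots> \<le> z\<^sup>2 * ln (real_of_int (\<bar>n\<bar> + d)) / ln 2 * (ln x / ln 2)"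
    using \<open>real (card S) \<le> _\<close> \<open>x \<ge> 1\<close> by (intro mult_right_mono) auto
  finally show ?thesis
    unfolding S_def by (simp add: conj_ac)
qed

lemma eventually_sum_card_small_ord_rat_le:
  assumes a: "a \<notin> {-1, 0, 1}"
  shows "eventually (\<lambda>x. (\<Sum>m\<in>{m::nat. primepow m \<and> real m \<le> x}.
      real (card {p. prime p \<and> real p \<le> x \<and> padic_val_rat p a = 0 \<and>
                     real (ord_rat p a) \<le> sqrt x / ln x ^ 3 \<and> m dvd (p - 1) div ord_rat p a}))
    \<le> x * ln (ln x) / (ln x)\<^sup>2) at_top"
proof -
  obtain n d where q: "quotient_of a = (n, d)" by fastforce
  define c where "c = ln (real_of_int (\<bar>n\<bar> + d)) / ln 2"
  have "eventually (\<lambda>x. c / ln 2 \<le> ln x ^ 3 * ln (ln x)) at_top"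
    by real_asymp
  moreover note eventually_ge_at_top[of "exp 1"]
  ultimately show ?thesis
  proof eventually_elim
    case (elim x)
    define L where "L = ln x"
    define z where "z = sqrt x / L ^ 3"
    have "x \<ge> 1"
      using elim(2) exp_ge_add_one_self[of 1] by linarith
    then have "L \<ge> 1"
      using elim(2) unfolding L_def by (auto simp: ln_ge_iff)
    then have "z \<ge> 0"
      using \<open>x \<ge> 1\<close> unfolding z_def by (intro divide_nonneg_nonneg) auto
    have "(\<Sum>m\<in>{m::nat. primepow m \<and> real m \<le> x}.
            real (card {p. prime p \<and> real p \<le> x \<and> padic_val_rat p a = 0 \<and>
                           real (ord_rat p a) \<le> z \<and> m dvd (p - 1) div ord_rat p a}))
          \<le> z\<^sup>2 * c * (L / ln 2)"
      using sum_card_small_ord_rat_le[OF a q \<open>x \<ge> 1\<close> \<open>z \<ge> 0\<close>] unfolding c_def L_def by simp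
    also have "\<dots> = x / L ^ 5 * (c / ln 2)"
      using \<open>x \<ge> 1\<close> \<open>L \<ge> 1\<close> by (simp add: z_def power_divide field_simps power_eq_if)
    also have "\<dots> \<le> x / L ^ 5 * (L ^ 3 * ln L)"
      using elim(1) \<open>x \<ge> 1\<close> \<open>L \<ge> 1\<close> by (fold L_def) (intro mult_left_mono divide_nonneg_nonneg, auto)
    also have "\<dots> = x * ln L / L\<^sup>2"
      using \<open>L \<ge> 1\<close> by (simp add: field_simps power_eq_if)
    finally show ?case
      unfolding L_def z_def .
  qed
qed

lemma card_large_ord_rat_le:
  assumes "a \<noteq> 0" "primepow m" "0 < z" "x / z \<le> x powr (2/3)"
    and brun_titchmarsh: "\<forall>q k. prime q \<longrightarrow> real (q ^ k) \<le> x powr (2/3) \<longrightarrow>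
      real (card {p. prime p \<and> real p \<le> x \<and> [p = 1] (mod q ^ k)}) \<le> 87 * x / (real (q ^ k) * ln x)"
  shows "real (card {p. prime p \<and> real p \<le> x \<and> padic_val_rat p a = 0 \<and> z < real (ord_rat p a) \<and>
                        m dvd (p - 1) div ord_rat p a})
         \<le> (if real m < x / z then 87 * x / (real m * ln x) else 0)"
    (is "real (card ?P) \<le> _")
proof -
  have P: "[p = 1] (mod m) \<and> real m < x / z" if "p \<in> ?P" for p
    using large_ord_rat_dvd_index[of a p x z m] that assms(1,3) by auto
  show ?thesis
  proof (cases "real m < x / z")
    case False
    then have "?P = {}" using P by force
    then have "card ?P = 0" by (simp only: card.empty)
    with False show ?thesis by simp
  next
    case True
    obtain q k where "prime q" "m = q ^ k"
      using assms(2) by (auto simp: primepow_def)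
    have "?P \<subseteq> {p. prime p \<and> real p \<le> x \<and> [p = 1] (mod q ^ k)}"
      using P \<open>m = q ^ k\<close> by auto
    then have "card ?P \<le> card {p. prime p \<and> real p \<le> x \<and> [p = 1] (mod q ^ k)}"
      by (intro card_mono finite_subset[OF _ finite_nat_real_le[of prime x]]) auto
    also have "real \<dots> \<le> 87 * x / (real m * ln x)"
      using brun_titchmarsh \<open>prime q\<close> True assms(4) \<open>m = q ^ k\<close> by auto
    finally show ?thesis
      using True by simp
  qed
qed

lemma sum_card_large_ord_rat_le:
  assumes "a \<noteq> 0" "x \<ge> 1" "0 < z" "x / z \<le> x powr (2/3)"
    and brun_titchmarsh: "\<forall>q k. prime q \<longrightarrow> real (q ^ k) \<le> x powr (2/3) \<longrightarrow>
      real (card {p. prime p \<and> real p \<le> x \<and> [p = 1] (mod q ^ k)}) \<le> 87 * x / (real (q ^ k) * ln x)"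
  shows "(\<Sum>m\<in>{m::nat. primepow m \<and> y < real m \<and> real m \<le> x}.
           real (card {p. prime p \<and> real p \<le> x \<and> padic_val_rat p a = 0 \<and> z < real (ord_rat p a) \<and>
                          m dvd (p - 1) div ord_rat p a}))
         \<le> 87 * x / ln x * (\<Sum>m\<in>{m::nat. primepow m \<and> y < real m \<and> real m \<le> x / z}. 1 / real m)"
proof -
  define M where "M = {m::nat. primepow m \<and> y < real m \<and> real m \<le> x}"
  have "finite M"
    unfolding M_def by (rule finite_subset[OF _ finite_nat_real_le[of primepow x]]) auto
  have "(\<Sum>m\<in>M. real (card {p. prime p \<and> real p \<le> x \<and> padic_val_rat p a = 0 \<and>
                     z < real (ord_rat p a) \<and> m dvd (p - 1) div ord_rat p a}))
        \<le> (\<Sum>m\<in>M. if real m < x / z then 87 * x / (real m * ln x) else 0)"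
    using assms by (intro sum_mono card_large_ord_rat_le) (auto simp: M_def)
  also have "\<dots> = (\<Sum>m\<in>{m\<in>M. real m < x / z}. 87 * x / (real m * ln x))"
    using \<open>finite M\<close> by (simp add: sum.inter_filter)
  also have "\<dots> \<le> (\<Sum>m\<in>{m::nat. primepow m \<and> y < real m \<and> real m \<le> x / z}. 87 * x / (real m * ln x))"
    using assms(2) by (intro sum_mono2 finite_subset[OF _ finite_nat_real_le[of primepow "x / z"]]) (auto simp: M_def)
  also have "\<dots> = 87 * x / ln x * (\<Sum>m\<in>{m::nat. primepow m \<and> y < real m \<and> real m \<le> x / z}. 1 / real m)"
    by (simp add: sum_distrib_left mult.commute)
  finally show ?thesis
    by (simp add: M_def)
qed

lemma eventually_sum_card_large_ord_rat_le:
  assumes a: "a \<noteq> 0" and B: "B \<ge> 0"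
  shows "eventually (\<lambda>x. (\<Sum>m\<in>{m::nat. primepow m \<and> sqrt x / ln x powr B < real m \<and> real m \<le> x}.
      real (card {p. prime p \<and> real p \<le> x \<and> padic_val_rat p a = 0 \<and>
                     sqrt x / ln x ^ 3 < real (ord_rat p a) \<and> m dvd (p - 1) div ord_rat p a}))
    \<le> 15660 * ((B + 3) / ln 2 + 1) * (x * ln (ln x) / (ln x)\<^sup>2)) at_top"
proof -
  have "eventually (\<lambda>x. sqrt x * ln x ^ 3 \<le> x powr (2/3)) at_top"
    by real_asymp
  moreover note eventually_sum_inverse_primepow_window_le[OF B]
    brun_titchmarsh_prime_power eventually_ge_at_top[of "exp 1"]
  ultimately show ?thesis
  proof eventually_elim
    case (elim x)
    define L where "L = ln x"
    define z where "z = sqrt x / L ^ 3"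
    have "x \<ge> 1"
      using elim(4) exp_ge_add_one_self[of 1] by linarith
    then have "L \<ge> 1"
      using elim(4) unfolding L_def by (auto simp: ln_ge_iff)
    have "z > 0"
      using \<open>x \<ge> 1\<close> \<open>L \<ge> 1\<close> unfolding z_def by auto
    have "x / z = sqrt x * L ^ 3"
      using \<open>x \<ge> 1\<close> \<open>L \<ge> 1\<close> unfolding z_def by (simp add: field_simps real_sqrt_mult_self)
    have "(\<Sum>m\<in>{m::nat. primepow m \<and> sqrt x / L powr B < real m \<and> real m \<le> x}.
            real (card {p. prime p \<and> real p \<le> x \<and> padic_val_rat p a = 0 \<and>
                           z < real (ord_rat p a) \<and> m dvd (p - 1) div ord_rat p a}))
          \<le> 87 * x / L * (\<Sum>m\<in>{m::nat. primepow m \<and> sqrt x / L powr B < real m \<and> real m \<le> sqrt x * L ^ 3}. 1 / real m)"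
      using sum_card_large_ord_rat_le[OF a \<open>x \<ge> 1\<close> \<open>z > 0\<close> _ elim(3)] \<open>x / z = _\<close> elim(1)
      unfolding L_def by simp
    also have "\<dots> \<le> 87 * x / L * (180 * ((B + 3) / ln 2 + 1) * ln L / L)"
      using elim(2) \<open>x \<ge> 1\<close> \<open>L \<ge> 1\<close> unfolding L_def by (intro mult_left_mono) auto
    also have "\<dots> = 15660 * ((B + 3) / ln 2 + 1) * (x * ln L / L\<^sup>2)"
      by (simp add: field_simps power2_eq_square)
    finally show ?case
      unfolding z_def L_def .
  qed
qed

lemma sum_card_index_dvd_split:
  fixes a :: rat and x y z :: real
  defines "M \<equiv> {m::nat. primepow m \<and> y < real m \<and> real m \<le> x}"
  shows "(\<Sum>m\<in>M. real (card {p. prime p \<and> real p \<le> x \<and> padic_val_rat p a = 0 \<and> m dvd (p - 1) div ord_rat p a}))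
    \<le> (\<Sum>m\<in>{m::nat. primepow m \<and> real m \<le> x}. real (card {p. prime p \<and> real p \<le> x \<and> padic_val_rat p a = 0 \<and>
          real (ord_rat p a) \<le> z \<and> m dvd (p - 1) div ord_rat p a}))
      + (\<Sum>m\<in>M. real (card {p. prime p \<and> real p \<le> x \<and> padic_val_rat p a = 0 \<and>
          z < real (ord_rat p a) \<and> m dvd (p - 1) div ord_rat p a}))"
proof -
  let ?S = "\<lambda>m. {p. prime p \<and> real p \<le> x \<and> padic_val_rat p a = 0 \<and> real (ord_rat p a) \<le> z \<and> m dvd (p - 1) div ord_rat p a}"
  let ?L = "\<lambda>m. {p. prime p \<and> real p \<le> x \<and> padic_val_rat p a = 0 \<and> z < real (ord_rat p a) \<and> m dvd (p - 1) div ord_rat p a}"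
  have "(\<Sum>m\<in>M. real (card {p. prime p \<and> real p \<le> x \<and> padic_val_rat p a = 0 \<and> m dvd (p - 1) div ord_rat p a}))
        \<le> (\<Sum>m\<in>M. real (card (?S m)) + real (card (?L m)))"
  proof (rule sum_mono)
    fix m
    have "{p. prime p \<and> real p \<le> x \<and> padic_val_rat p a = 0 \<and> m dvd (p - 1) div ord_rat p a} = ?S m \<union> ?L m"
      by auto
    then show "real (card {p. prime p \<and> real p \<le> x \<and> padic_val_rat p a = 0 \<and> m dvd (p - 1) div ord_rat p a})
               \<le> real (card (?S m)) + real (card (?L m))"
      using card_Un_le[of "?S m" "?L m"] by (simp only: of_nat_add[symmetric] of_nat_le_iff)
  qed
  also have "\<dots> \<le> (\<Sum>m\<in>{m::nat. primepow m \<and> real m \<le> x}. real (card (?S m))) + (\<Sum>m\<in>M. real (card (?L m)))"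
    unfolding sum.distrib M_def by (intro add_mono sum_mono2 order_refl finite_nat_real_le) auto
  finally show ?thesis .
qed

theorem proposition4p1:
  fixes a :: rat and B :: real
  assumes "a \<notin> {-1, 0, 1}" and "B \<ge> 0"
  shows "\<exists>C>0. \<exists>x0. \<forall>x\<ge>x0.
    (\<Sum>m\<in>{m::nat. primepow m \<and> sqrt x / (ln x) powr B < real m \<and> real m \<le> x}.
       real (card {p::nat. prime p \<and> real p \<le> x \<and> padic_val_rat p a = 0 \<and>
                          m dvd (p - 1) div ord_rat p a}))
    \<le> C * (x * ln (ln x) / (ln x)^2)"
proof -
  define C where "C = 1 + 15660 * ((B + 3) / ln 2 + 1)"
  have "C > 0" using assms(2) by (simp add: C_def add_pos_nonneg)
  have "a \<noteq> 0" using assms(1) by auto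
  have "eventually (\<lambda>x. (\<Sum>m\<in>{m::nat. primepow m \<and> sqrt x / (ln x) powr B < real m \<and> real m \<le> x}.
       real (card {p::nat. prime p \<and> real p \<le> x \<and> padic_val_rat p a = 0 \<and> m dvd (p - 1) div ord_rat p a}))
    \<le> C * (x * ln (ln x) / (ln x)^2)) at_top"
    using eventually_sum_card_small_ord_rat_le[OF assms(1)]
      eventually_sum_card_large_ord_rat_le[OF \<open>a \<noteq> 0\<close> assms(2)]
  proof eventually_elim
    case (elim x)
    then show ?case
      using sum_card_index_dvd_split[where a = a and x = x and y = "sqrt x / (ln x) powr B" and z = "sqrt x / ln x ^ 3"]
      unfolding C_def distrib_right mult_1 by linarith
  qed
  then show ?thesis
    using \<open>C > 0\<close> unfolding eventually_at_top_linorder by blast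
qed

end
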